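(* For every $n\geq 1$, $T_n(x,y)=T_{2,n}(x,y)+3T_{1,n}(x,y)+T_{0,n}(x,y)$, where $T_{2,n},T_{1,n},T_{0,n}\in\mathbb{Z}[x,y]$ satisfy the initial conditions $T_{2,1}=y+2$, $T_{1,1}=x-1$, $T_{0,1}=(x-1)^2$ and, for all $n\geq1$, the following identities (in $\mathbb{Q}(x,y)$), where $T_{i}$ abbreviates $T_{i,n}(x,y)$: $$T_{2,n+1}=(y-1)T_{2}^3+\frac{1}{x-1}\left(6T_{2}^2T_{1}+3T_{2}T_{1}^2\right),$$ $$T_{1,n+1}=(y-1)T_{2}^2T_{1}+\frac{1}{x-1}\left(T_{2}^2T_{0}+7T_{2}T_{1}^2+2T_{2}T_{1}T_{0}+4T_{1}^3+T_{1}^2T_{0}\right),$$ $$T_{0,n+1}=(y-1)\left(3T_{2}T_{1}^2+T_{1}^3\right)+\frac{1}{x-1}\left(12T_{2}T_{1}T_{0}+3T_{2}T_{0}^2+14T_{1}^3+24T_{1}^2T_{0}+9T_{1}T_{0}^2+T_{0}^3\right).$$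
   Context: Graphs are finite; multiple edges are allowed. For a graph $G$, a spanning subgraph $A$ has vertex set $V(G)$ and edge set $E(A)\subseteq E(G)$; $k(A)$ is its number of connected components, $r(A)=|V(G)|-k(A)$, $n(A)=|E(A)|-r(A)$. The Tutte polynomial is $T(G;x,y)=\sum_{A}(x-1)^{r(G)-r(A)}(y-1)^{n(A)}$, the sum over all spanning subgraphs $A$; call the summand the weight of $A$. Sierpiński graphs $\Gamma_n$ ($n\ge1$), each with three distinguished outmost vertices called top, left, right: $\Gamma_1$ is the triangle $K_3$ with its three vertices as top, left, right. $\Gamma_{n+1}$ is obtained from three disjoint copies $G_1,G_2,G_3$ of $\Gamma_n$ by identifying left$(G_1)$ with top$(G_2)$, right$(G_1)$ with top$(G_3)$, and right$(G_2)$ with left$(G_3)$; its outmost vertices are top$(G_1)$ (top), left$(G_2)$ (left), right$(G_3)$ (right). Then $|V(\Gamma_n)|=(3^n+3)/2$, $|E(\Gamma_n)|=3^n$. Write $T_n(x,y)=T(\Gamma_n;x,y)$. Define $T_{2,n}(x,y)$ as the sum of the weights (with respect to $G=\Gamma_n$) of the spanning subgraphs of $\Gamma_n$ in which the three outmost vertices lie in one component; $T_{1,n}(x,y)$ as the sum over spanning subgraphs in which the left and right outmost vertices lie in the same component and the top one lies in a different component; $T_{0,n}(x,y)$ as the sum over spanning subgraphs in which the three outmost vertices lie in three distinct components. *)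

theory Defs
  imports Complex_Main
begin

text \<open>Vertices are natural numbers; edges are given as a list of (unordered) endpoint pairs,
  so that parallel edges are distinct list positions.\<close>

record sgraph =
  verts :: "nat set"
  edges :: "(nat \<times> nat) list"
  topv :: nat
  lftv :: nat
  rgtv :: nat

definition triangle :: sgraph where
  "triangle = \<lparr> verts = {0,1,2}, edges = [(0,1),(0,2),(1,2)],
                 topv = 0, lftv = 1, rgtv = 2 \<rparr>"

text \<open>Gluing three disjoint copies G1,G2,G3 of G: copy i is embedded by f_i;
  left(G1)=top(G2), right(G1)=top(G3), right(G2)=left(G3).\<close>

definition glue :: "sgraph \<Rightarrow> sgraph" where
  "glue G = (let N = Suc (Max (verts G));
      f1 = (\<lambda>v. v);
      f2 = (\<lambda>v. if v = topv G then lftv G else N + v);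
      f3 = (\<lambda>v. if v = topv G then rgtv G else if v = lftv G then N + rgtv G else 2 * N + v)
   in \<lparr> verts = f1 ` verts G \<union> f2 ` verts G \<union> f3 ` verts G,
        edges = map (map_prod f1 f1) (edges G) @ map (map_prod f2 f2) (edges G)
                @ map (map_prod f3 f3) (edges G),
        topv = f1 (topv G), lftv = f2 (lftv G), rgtv = f3 (rgtv G) \<rparr>)"

text \<open>Sierpinski graph Gamma_n, for n \<ge> 1 (Gamma 0 is set to the triangle as well, unused).\<close>
fun Gamma :: "nat \<Rightarrow> sgraph" where
  "Gamma 0 = triangle"
| "Gamma (Suc 0) = triangle"
| "Gamma (Suc (Suc n)) = glue (Gamma (Suc n))"

text \<open>Spanning subgraphs are given by sets A of edge indices.\<close>
definition spanning :: "sgraph \<Rightarrow> nat set set" where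
  "spanning G = Pow {..<length (edges G)}"

definition adj :: "sgraph \<Rightarrow> nat set \<Rightarrow> (nat \<times> nat) set" where
  "adj G A = {(u, v). \<exists>i\<in>A. i < length (edges G) \<and>
                       (edges G ! i = (u, v) \<or> edges G ! i = (v, u))}"

definition conn :: "sgraph \<Rightarrow> nat set \<Rightarrow> nat \<Rightarrow> nat \<Rightarrow> bool" where
  "conn G A u v \<longleftrightarrow> (u, v) \<in> (adj G A)\<^sup>*"

definition ncomp :: "sgraph \<Rightarrow> nat set \<Rightarrow> nat" where
  "ncomp G A = card (verts G // {(u, v). u \<in> verts G \<and> v \<in> verts G \<and> conn G A u v})"

definition rk :: "sgraph \<Rightarrow> nat set \<Rightarrow> nat" where
  "rk G A = card (verts G) - ncomp G A"

definition nul :: "sgraph \<Rightarrow> nat set \<Rightarrow> nat" where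
  "nul G A = card A - rk G A"

text \<open>Weight (x-1)^(r(G)-r(A)) (y-1)^(n(A)); both exponents are nonnegative integers.\<close>
definition weight :: "sgraph \<Rightarrow> nat set \<Rightarrow> real \<Rightarrow> real \<Rightarrow> real" where
  "weight G A x y = (x - 1) ^ (rk G {..<length (edges G)} - rk G A) * (y - 1) ^ nul G A"

definition tutte :: "sgraph \<Rightarrow> real \<Rightarrow> real \<Rightarrow> real" where
  "tutte G x y = (\<Sum>A\<in>spanning G. weight G A x y)"

definition Tn :: "nat \<Rightarrow> real \<Rightarrow> real \<Rightarrow> real" where
  "Tn n x y = tutte (Gamma n) x y"

definition T2 :: "nat \<Rightarrow> real \<Rightarrow> real \<Rightarrow> real" where
  "T2 n x y = (let G = Gamma n in
     \<Sum>A\<in>{A\<in>spanning G. conn G A (topv G) (lftv G) \<and> conn G A (lftv G) (rgtv G)}.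
       weight G A x y)"

definition T1 :: "nat \<Rightarrow> real \<Rightarrow> real \<Rightarrow> real" where
  "T1 n x y = (let G = Gamma n in
     \<Sum>A\<in>{A\<in>spanning G. conn G A (lftv G) (rgtv G) \<and> \<not> conn G A (topv G) (lftv G)}.
       weight G A x y)"

definition T0 :: "nat \<Rightarrow> real \<Rightarrow> real \<Rightarrow> real" where
  "T0 n x y = (let G = Gamma n in
     \<Sum>A\<in>{A\<in>spanning G. \<not> conn G A (topv G) (lftv G) \<and> \<not> conn G A (lftv G) (rgtv G)
                          \<and> \<not> conn G A (topv G) (rgtv G)}.
       weight G A x y)"

end

theory Submission
  imports Defs
begin

text \<open>
  The Sierpinski graph Gamma (n+1) is glue (Gamma n): three copies of Gamma n
  sharing the three ports PA, PB, PC. A spanning subgraph A of the glued graph splits into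
  three spanning subgraphs of the copies, and we classify spanning subgraphs by their
  connection pattern (which of the outmost vertices are connected). The pattern of A and its
  number of components are determined by the parts: the components avoiding the ports are
  those of the parts, and the classes of the six ports are computed by a finite port
  calculus, which also shows that k(A) + 3 = k(A0) + k(A1) + k(A2) + [the parts close a cycle].
  Since every graph here is connected and satisfies r(A) <= |A|, the weight of A is
  (x-1)^(k(A)-1) (y-1)^(|A|+k(A)-|V|), so the weight of A is the product of the weights of
  its parts times y-1 (cycle) or 1/(x-1) (no cycle). Summing over all triples of parts gives
  a polynomial recurrence for the pattern sums, which are symmetric in the three patterns
  with exactly two connected outmost vertices; T2, T1, T0 are the pattern sums of the
  patterns Joint, LR, Sep, and the triangle gives the initial values.
\<close>

section \<open>Classes of a relation and gluing of pieces\<close>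

definition rclass :: "'a set \<Rightarrow> ('a \<times> 'a) set \<Rightarrow> 'a \<Rightarrow> 'a set" where
  "rclass X R u = {v \<in> X. (u, v) \<in> R\<^sup>*}"

lemma rtrancl_map_prod:
  assumes "(a, b) \<in> R\<^sup>*"
  shows "(f a, f b) \<in> (map_prod f f ` R)\<^sup>*"
  using assms
proof induct
  case (step b c)
  then have "(f b, f c) \<in> map_prod f f ` R" by force
  with step show ?case by (meson rtrancl_into_rtrancl)
qed simp

lemma rtrancl_map_prod_iff:
  assumes inj: "inj f"
  shows "(f a, f b) \<in> (map_prod f f ` R)\<^sup>* \<longleftrightarrow> (a, b) \<in> R\<^sup>*"
proof
  have "\<And>a b. u = f a \<Longrightarrow> v = f b \<Longrightarrow> (a, b) \<in> R\<^sup>*"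
    if "(u, v) \<in> (map_prod f f ` R)\<^sup>*" for u v
    using that
  proof induct
    case base
    then show ?case using inj by (simp add: inj_eq)
  next
    case (step w z)
    from step(2) obtain c d where cd: "(c, d) \<in> R" "w = f c" "z = f d" by auto
    have "(a, c) \<in> R\<^sup>*" using step(3)[OF step(4) cd(2)] .
    moreover have "d = b" using cd(3) step(5) inj by (simp add: inj_eq)
    ultimately show ?case using cd(1) by (meson rtrancl_into_rtrancl)
  qed
  then show "(f a, f b) \<in> (map_prod f f ` R)\<^sup>* \<Longrightarrow> (a, b) \<in> R\<^sup>*" by blast
qed (rule rtrancl_map_prod)

lemma rtrancl_stays:
  assumes "(v, w) \<in> Q\<^sup>*" "Q \<subseteq> W \<times> W" "v \<in> W"
  shows "w \<in> W"
  using assms by induct auto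

lemma rclass_eq_iff:
  assumes "R \<subseteq> X \<times> X" "sym R" "u \<in> X" "v \<in> X"
  shows "rclass X R u = rclass X R v \<longleftrightarrow> (u, v) \<in> R\<^sup>*"
proof
  assume "rclass X R u = rclass X R v"
  moreover have "v \<in> rclass X R v" using assms unfolding rclass_def by auto
  ultimately show "(u, v) \<in> R\<^sup>*" unfolding rclass_def by auto
next
  assume h: "(u, v) \<in> R\<^sup>*"
  then have "(v, u) \<in> R\<^sup>*" using assms(2) by (meson sym_rtrancl symD)
  then show "rclass X R u = rclass X R v" using h unfolding rclass_def by (auto intro: rtrancl_trans)
qed

lemma card_rclasses_split:
  assumes fin: "finite X" and RX: "R \<subseteq> X \<times> X" and sym: "sym R" and PX: "P \<subseteq> X"
  shows "card (rclass X R ` X) = card {C \<in> rclass X R ` X. C \<inter> P = {}} + card (rclass X R ` P)"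
proof -
  have meets_P: "C \<in> rclass X R ` P" if "C \<in> rclass X R ` X" "C \<inter> P \<noteq> {}" for C
  proof -
    from that obtain u p where u: "u \<in> X" "C = rclass X R u" and p: "p \<in> C" "p \<in> P" by auto
    then have "(u, p) \<in> R\<^sup>*" "p \<in> X" unfolding rclass_def by auto
    then have "C = rclass X R p" using rclass_eq_iff[OF RX sym u(1)] u(2) by simp
    with p(2) show ?thesis by blast
  qed
  have "rclass X R ` X = {C \<in> rclass X R ` X. C \<inter> P = {}} \<union> rclass X R ` P"
    using meets_P PX by blast
  moreover have "{C \<in> rclass X R ` X. C \<inter> P = {}} \<inter> rclass X R ` P = {}"
    using PX unfolding rclass_def by auto
  moreover have "finite (rclass X R ` X)" using fin by simp
  ultimately show ?thesis by (metis (no_types, lifting) card_Un_disjoint finite_Un)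
qed

lemma rclass_map:
  assumes inj: "inj f" and v: "v \<in> V"
  shows "rclass (f ` V) (map_prod f f ` R) (f v) = f ` rclass V R v"
  using rtrancl_map_prod_iff[OF inj] unfolding rclass_def by auto

lemma card_rclasses_avoiding_map:
  assumes inj: "inj f" and P: "\<And>v. v \<in> V \<Longrightarrow> f v \<in> P \<longleftrightarrow> v \<in> P'"
  shows "card {C \<in> rclass (f ` V) (map_prod f f ` R) ` f ` V. C \<inter> P = {}}
       = card {C \<in> rclass V R ` V. C \<inter> P' = {}}"
proof -
  have avoid: "f ` rclass V R v \<inter> P = {} \<longleftrightarrow> rclass V R v \<inter> P' = {}" for v
    using P unfolding rclass_def by blast
  have "{C \<in> rclass (f ` V) (map_prod f f ` R) ` f ` V. C \<inter> P = {}}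
      = image f ` {C \<in> rclass V R ` V. C \<inter> P' = {}}"
  proof (rule set_eqI, rule iffI)
    fix C assume "C \<in> {C \<in> rclass (f ` V) (map_prod f f ` R) ` f ` V. C \<inter> P = {}}"
    then obtain v where "v \<in> V" "C = f ` rclass V R v" "C \<inter> P = {}"
      using rclass_map[OF inj] by auto
    then show "C \<in> image f ` {C \<in> rclass V R ` V. C \<inter> P' = {}}" using avoid by auto
  next
    fix C assume "C \<in> image f ` {C \<in> rclass V R ` V. C \<inter> P' = {}}"
    then obtain v where v: "v \<in> V" "C = f ` rclass V R v" "rclass V R v \<inter> P' = {}" by auto
    then have "C \<inter> P = {}" using avoid by blast
    moreover have "C = rclass (f ` V) (map_prod f f ` R) (f v)" using rclass_map[OF inj v(1)] v(2) by simp
    ultimately show "C \<in> {C \<in> rclass (f ` V) (map_prod f f ` R) ` f ` V. C \<inter> P = {}}"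
      using v(1) by blast
  qed
  moreover have "inj_on (image f) X" for X
    using inj by (meson inj_image_eq_iff inj_onI)
  ultimately show ?thesis by (simp add: card_image)
qed

text \<open>Counting the classes of the elements of a list: r decides whether two elements
  lie in the same class, and every element without an r-partner later in the list
  contributes one new class.\<close>

fun nclasses :: "('a \<Rightarrow> 'a \<Rightarrow> bool) \<Rightarrow> 'a list \<Rightarrow> nat" where
  "nclasses r [] = 0"
| "nclasses r (x # xs) = nclasses r xs + (if \<exists>y\<in>set xs. r x y then 0 else 1)"

lemma card_image_nclasses:
  assumes "\<And>p q. p \<in> set xs \<Longrightarrow> q \<in> set xs \<Longrightarrow> f p = f q \<longleftrightarrow> r p q"
  shows "card (f ` set xs) = nclasses r xs"
  using assms
proof (induct xs)
  case (Cons x xs)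
  then have "card (f ` set xs) = nclasses r xs" by auto
  moreover have "f x \<in> f ` set xs \<longleftrightarrow> (\<exists>y\<in>set xs. r x y)" using Cons(2) by auto
  ultimately show ?case by (auto simp: card_insert_if)
qed simp

text \<open>Classes avoiding the ports are classes of single pieces,
  and reachability between ports is governed by reachability inside the pieces.\<close>

locale pieces =
  fixes I :: "'i set" and W :: "'i \<Rightarrow> 'a set" and Q :: "'i \<Rightarrow> ('a \<times> 'a) set"
    and P :: "'a set"
  assumes piece_rel: "\<And>i. i \<in> I \<Longrightarrow> Q i \<subseteq> W i \<times> W i"
    and piece_overlap: "\<And>i j. i \<in> I \<Longrightarrow> j \<in> I \<Longrightarrow> i \<noteq> j \<Longrightarrow> W i \<inter> W j \<subseteq> P"
begin

definition Rel :: "('a \<times> 'a) set" where "Rel = (\<Union>i\<in>I. Q i)"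
definition Dom :: "'a set" where "Dom = (\<Union>i\<in>I. W i)"

lemma piece_rtrancl: "i \<in> I \<Longrightarrow> (Q i)\<^sup>* \<subseteq> Rel\<^sup>*"
  unfolding Rel_def by (rule rtrancl_mono) blast

lemma leave_piece:
  assumes i: "i \<in> I" and v: "v \<in> W i" and vw: "(v, w) \<in> (Q i)\<^sup>*" and wz: "(w, z) \<in> Rel"
  obtains "(v, z) \<in> (Q i)\<^sup>*" | j where "j \<in> I" "w \<in> P" "w \<in> W j" "(w, z) \<in> Q j"
proof -
  have wW: "w \<in> W i" using rtrancl_stays[OF vw piece_rel[OF i] v] .
  from wz obtain j where j: "j \<in> I" "(w, z) \<in> Q j" unfolding Rel_def by auto
  then have "w \<in> W j" using piece_rel by blast
  show thesis
  proof (cases "j = i")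
    case True
    then show thesis using that(1) vw j by (meson rtrancl_into_rtrancl)
  next
    case False
    then show thesis using that(2) j \<open>w \<in> W j\<close> piece_overlap[OF i j(1)] wW by blast
  qed
qed

lemma piece_path:
  assumes "(v, w) \<in> Rel\<^sup>*" "i \<in> I" "v \<in> W i"
  shows "(v, w) \<in> (Q i)\<^sup>* \<or> (\<exists>p\<in>P. (v, p) \<in> (Q i)\<^sup>* \<and> (p, w) \<in> Rel\<^sup>*)"
  using assms(1)
proof induct
  case (step w z)
  from step(3) show ?case
  proof
    assume vw: "(v, w) \<in> (Q i)\<^sup>*"
    have wz: "(w, z) \<in> Rel\<^sup>*" using step(2) by blast
    show ?thesis
    proof (rule leave_piece[OF assms(2,3) vw step(2)])
      assume "(v, z) \<in> (Q i)\<^sup>*"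
      then show ?thesis ..
    next
      fix j assume "w \<in> P"
      then show ?thesis using vw wz by blast
    qed
  next
    assume "\<exists>p\<in>P. (v, p) \<in> (Q i)\<^sup>* \<and> (p, w) \<in> Rel\<^sup>*"
    then show ?thesis using step(2) by (meson rtrancl.rtrancl_into_rtrancl)
  qed
qed simp

lemma ports_connected:
  assumes PD: "P \<subseteq> Dom"
    and E: "\<And>i p q. i \<in> I \<Longrightarrow> p \<in> P \<Longrightarrow> q \<in> P \<Longrightarrow> p \<in> W i \<Longrightarrow> (p, q) \<in> (Q i)\<^sup>* \<Longrightarrow> (p, q) \<in> E"
    and trans: "trans E"
    and pq: "(p, q) \<in> Rel\<^sup>*" "p \<in> P" "q \<in> P"
  shows "(p, q) \<in> E"
proof -
  have "\<exists>r\<in>P. \<exists>i\<in>I. (p, r) \<in> E \<and> r \<in> W i \<and> (r, w) \<in> (Q i)\<^sup>*" if "(p, w) \<in> Rel\<^sup>*" for w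
    using that
  proof induct
    case base
    from pq(2) PD obtain i where "i \<in> I" "p \<in> W i" unfolding Dom_def by auto
    then show ?case using E[of i p p] pq(2) by auto
  next
    case (step w z)
    then obtain r i where ri: "r \<in> P" "i \<in> I" "(p, r) \<in> E" "r \<in> W i" "(r, w) \<in> (Q i)\<^sup>*" by blast
    show ?case
    proof (rule leave_piece[OF ri(2,4,5) step(2)])
      assume "(r, z) \<in> (Q i)\<^sup>*"
      then show ?thesis using ri by blast
    next
      fix j assume j: "j \<in> I" "w \<in> P" "w \<in> W j" "(w, z) \<in> Q j"
      have "(p, w) \<in> E" using E[OF ri(2) ri(1) j(2) ri(4) ri(5)] ri(3) trans by (meson transD)
      then show ?thesis using j by blast
    qed
  qed
  with pq obtain r i where ri: "r \<in> P" "i \<in> I" "(p, r) \<in> E" "r \<in> W i" "(r, q) \<in> (Q i)\<^sup>*" by blast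
  then show ?thesis using E[OF ri(2) ri(1) pq(3) ri(4) ri(5)] trans by (meson transD)
qed

lemma rclass_piece_sub:
  assumes i: "i \<in> I"
  shows "rclass (W i) (Q i) u \<subseteq> rclass Dom Rel u"
  using piece_rtrancl[OF i] i unfolding rclass_def Dom_def by auto

lemma rclass_local:
  assumes i: "i \<in> I" and u: "u \<in> W i" and np: "rclass (W i) (Q i) u \<inter> P = {}"
  shows "rclass Dom Rel u = rclass (W i) (Q i) u"
proof
  show "rclass Dom Rel u \<subseteq> rclass (W i) (Q i) u"
  proof
    fix v assume "v \<in> rclass Dom Rel u"
    then have v: "(u, v) \<in> Rel\<^sup>*" unfolding rclass_def by auto
    have stays: "w \<in> W i" if "(u, w) \<in> (Q i)\<^sup>*" for w
      using rtrancl_stays[OF that piece_rel[OF i] u] .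
    from piece_path[OF v i u] show "v \<in> rclass (W i) (Q i) u"
    proof
      assume "(u, v) \<in> (Q i)\<^sup>*"
      then show ?thesis using stays unfolding rclass_def by auto
    next
      assume "\<exists>p\<in>P. (u, p) \<in> (Q i)\<^sup>* \<and> (p, v) \<in> Rel\<^sup>*"
      then obtain p where "p \<in> P" "(u, p) \<in> (Q i)\<^sup>*" by blast
      then have "p \<in> rclass (W i) (Q i) u \<inter> P" using stays unfolding rclass_def by auto
      with np show ?thesis by blast
    qed
  qed
qed (rule rclass_piece_sub[OF i])

lemma portfree_classes:
  "{C \<in> rclass Dom Rel ` Dom. C \<inter> P = {}} = (\<Union>i\<in>I. {C \<in> rclass (W i) (Q i) ` W i. C \<inter> P = {}})"
proof (rule set_eqI, rule iffI)
  fix C assume "C \<in> {C \<in> rclass Dom Rel ` Dom. C \<inter> P = {}}"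
  then obtain u i where u: "i \<in> I" "u \<in> W i" "C = rclass Dom Rel u" "C \<inter> P = {}"
    unfolding Dom_def by auto
  then have "rclass (W i) (Q i) u \<inter> P = {}" using rclass_piece_sub[OF u(1)] by blast
  then show "C \<in> (\<Union>i\<in>I. {C \<in> rclass (W i) (Q i) ` W i. C \<inter> P = {}})"
    using rclass_local[OF u(1,2)] u by auto
next
  fix C assume "C \<in> (\<Union>i\<in>I. {C \<in> rclass (W i) (Q i) ` W i. C \<inter> P = {}})"
  then obtain i u where u: "i \<in> I" "u \<in> W i" "C = rclass (W i) (Q i) u" "C \<inter> P = {}" by auto
  then show "C \<in> {C \<in> rclass Dom Rel ` Dom. C \<inter> P = {}}"
    using rclass_local[OF u(1,2)] unfolding Dom_def by auto
qed

lemma card_portfree_classes: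
  assumes "finite I" and "\<And>i. i \<in> I \<Longrightarrow> finite (W i)"
  shows "card {C \<in> rclass Dom Rel ` Dom. C \<inter> P = {}}
       = (\<Sum>i\<in>I. card {C \<in> rclass (W i) (Q i) ` W i. C \<inter> P = {}})"
  unfolding portfree_classes
proof (rule card_UN_disjoint)
  show "\<forall>i\<in>I. \<forall>j\<in>I. i \<noteq> j \<longrightarrow> {C \<in> rclass (W i) (Q i) ` W i. C \<inter> P = {}}
                         \<inter> {C \<in> rclass (W j) (Q j) ` W j. C \<inter> P = {}} = {}"
  proof (intro ballI impI equals0I)
    fix i j C assume ij: "i \<in> I" "j \<in> I" "i \<noteq> j"
      and "C \<in> {C \<in> rclass (W i) (Q i) ` W i. C \<inter> P = {}} \<inter> {C \<in> rclass (W j) (Q j) ` W j. C \<inter> P = {}}"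
    then obtain u v where C: "u \<in> W i" "C = rclass (W i) (Q i) u" "C = rclass (W j) (Q j) v" "C \<inter> P = {}"
      by blast
    then have "u \<in> C" "C \<subseteq> W j" unfolding rclass_def by auto
    then show False using piece_overlap[OF ij] C by blast
  qed
qed (use assms in auto)

end

section \<open>Connectivity in spanning subgraphs\<close>

definition wf_sgraph :: "sgraph \<Rightarrow> bool" where
  "wf_sgraph G \<longleftrightarrow> finite (verts G) \<and> topv G \<in> verts G \<and> lftv G \<in> verts G \<and> rgtv G \<in> verts G
     \<and> topv G \<noteq> lftv G \<and> topv G \<noteq> rgtv G \<and> lftv G \<noteq> rgtv G
     \<and> (\<forall>e\<in>set (edges G). fst e \<in> verts G \<and> snd e \<in> verts G)"

lemma adj_sub: "wf_sgraph G \<Longrightarrow> adj G A \<subseteq> verts G \<times> verts G"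
  unfolding adj_def wf_sgraph_def by (auto dest!: nth_mem)

lemma adj_sym: "sym (adj G A)"
  unfolding adj_def sym_def by auto

lemma conn_refl: "conn G A u u"
  unfolding conn_def by simp

lemma conn_sym: "conn G A u v \<Longrightarrow> conn G A v u"
  unfolding conn_def by (meson adj_sym sym_rtrancl symD)

lemma conn_trans: "conn G A u v \<Longrightarrow> conn G A v w \<Longrightarrow> conn G A u w"
  unfolding conn_def by (meson rtrancl_trans)

lemma ncomp_rclass: "ncomp G A = card (rclass (verts G) (adj G A) ` verts G)"
proof -
  have "verts G // {(u, v). u \<in> verts G \<and> v \<in> verts G \<and> conn G A u v}
      = rclass (verts G) (adj G A) ` verts G"
    unfolding quotient_def rclass_def conn_def by (auto simp: Image_def)
  then show ?thesis unfolding ncomp_def by simp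
qed

lemma rclass_eq_conn:
  assumes "wf_sgraph G" "u \<in> verts G" "v \<in> verts G"
  shows "rclass (verts G) (adj G A) u = rclass (verts G) (adj G A) v \<longleftrightarrow> conn G A u v"
  unfolding conn_def using rclass_eq_iff[OF adj_sub[OF assms(1)] adj_sym assms(2,3)] .

lemma ncomp_pos:
  assumes "wf_sgraph G"
  shows "1 \<le> ncomp G A"
proof -
  have "finite (verts G)" "verts G \<noteq> {}" using assms unfolding wf_sgraph_def by auto
  then show ?thesis unfolding ncomp_rclass by (simp add: Suc_leI card_gt_0_iff)
qed

lemma ncomp_le_card:
  assumes "wf_sgraph G"
  shows "ncomp G A \<le> card (verts G)"
  using assms unfolding ncomp_rclass wf_sgraph_def by (simp add: card_image_le)

lemma ncomp_one_conn:
  assumes G: "wf_sgraph G" and k: "ncomp G A = 1" and u: "u \<in> verts G" and v: "v \<in> verts G"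
  shows "conn G A u v"
proof -
  from k obtain C where "rclass (verts G) (adj G A) ` verts G = {C}"
    unfolding ncomp_rclass by (rule card_1_singletonE)
  then have "rclass (verts G) (adj G A) u = rclass (verts G) (adj G A) v" using u v by blast
  then show ?thesis using rclass_eq_conn[OF G u v] by simp
qed

lemma ncomp_two:
  assumes G: "wf_sgraph G" and u: "u \<in> verts G" and v: "v \<in> verts G" and uv: "\<not> conn G A u v"
  shows "2 \<le> ncomp G A"
proof -
  let ?c = "rclass (verts G) (adj G A)"
  have "?c u \<noteq> ?c v" using rclass_eq_conn[OF G u v] uv by simp
  moreover have "finite (?c ` verts G)" using G unfolding wf_sgraph_def by auto
  then have "card {?c u, ?c v} \<le> card (?c ` verts G)" by (rule card_mono) (use u v in auto)
  ultimately show ?thesis unfolding ncomp_rclass by simp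
qed

section \<open>Connection patterns and the port calculus\<close>

text \<open>The corners (top, left, right outmost vertex) of a copy, and the six ports of the glued
  graph: PT = top of copy 0, PA = left of copy 0 = top of copy 1, PB = right of copy 0 =
  top of copy 2, PC = right of copy 1 = left of copy 2, PL = left of copy 1,
  PR = right of copy 2. The outmost vertices of the glued graph are PT, PL, PR.\<close>

datatype corner = Ct | Cl | Cr

datatype port = PT | PA | PB | PC | PL | PR

fun corner_port :: "nat \<Rightarrow> corner \<Rightarrow> port" where
  "corner_port i c = (if i = 0 then (case c of Ct \<Rightarrow> PT | Cl \<Rightarrow> PA | Cr \<Rightarrow> PB)
     else if i = 1 then (case c of Ct \<Rightarrow> PA | Cl \<Rightarrow> PL | Cr \<Rightarrow> PC)
     else (case c of Ct \<Rightarrow> PB | Cl \<Rightarrow> PC | Cr \<Rightarrow> PR))"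

lemma UNIV_corner: "(UNIV :: corner set) = {Ct, Cl, Cr}"
  using corner.exhaust by auto

lemma UNIV_port: "(UNIV :: port set) = {PT, PA, PB, PC, PL, PR}"
  using port.exhaust by auto

lemma ex_corner: "(\<exists>c. P c) \<longleftrightarrow> P Ct \<or> P Cl \<or> P Cr"
  by (metis corner.exhaust)

lemma ex_port: "(\<exists>u. P u) \<longleftrightarrow> P PT \<or> P PA \<or> P PB \<or> P PC \<or> P PL \<or> P PR"
  by (metis port.exhaust)

lemma ex_less3: "(\<exists>i<3. P (i::nat)) \<longleftrightarrow> P 0 \<or> P 1 \<or> P 2"
  by (auto simp: eval_nat_numeral less_Suc_eq)

lemma port_is_corner: "\<exists>i<3. \<exists>c. corner_port i c = u"
  unfolding ex_less3 ex_corner by (cases u) auto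

text \<open>The connection pattern of a spanning subgraph records which of its three outmost
  vertices are connected: all three (Joint), only left and right (LR), only top and left
  (TL), only top and right (TR), or none (Sep).\<close>

datatype pattern = Joint | LR | TL | TR | Sep

lemma UNIV_pattern: "(UNIV :: pattern set) = {Joint, LR, TL, TR, Sep}"
  using pattern.exhaust by auto

fun pat_rel :: "pattern \<Rightarrow> corner \<Rightarrow> corner \<Rightarrow> bool" where
  "pat_rel Joint c d = True"
| "pat_rel LR c d = (c = d \<or> (c \<noteq> Ct \<and> d \<noteq> Ct))"
| "pat_rel TL c d = (c = d \<or> (c \<noteq> Cr \<and> d \<noteq> Cr))"
| "pat_rel TR c d = (c = d \<or> (c \<noteq> Cl \<and> d \<noteq> Cl))"
| "pat_rel Sep c d = (c = d)"

lemma pat_rel_refl [simp]: "pat_rel p c c"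
  by (cases p) auto

lemma pat_rel_commute: "pat_rel p c d \<longleftrightarrow> pat_rel p d c"
  by (cases p) auto

text \<open>The classes of the equivalence generated by links are
  described by a representative port_rep: first move an outer port into the interior
  triangle PA, PB, PC, then move to the first port of that triangle in the same class.\<close>

definition copy_pat :: "pattern \<Rightarrow> pattern \<Rightarrow> pattern \<Rightarrow> nat \<Rightarrow> pattern" where
  "copy_pat p1 p2 p3 i = (if i = 0 then p1 else if i = 1 then p2 else p3)"

definition port_link :: "pattern \<Rightarrow> pattern \<Rightarrow> pattern \<Rightarrow> port \<Rightarrow> port \<Rightarrow> bool" where
  "port_link p1 p2 p3 u w \<longleftrightarrow> (\<exists>i<3. \<exists>c d. corner_port i c = u \<and> corner_port i d = w
     \<and> pat_rel (copy_pat p1 p2 p3 i) c d)"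

definition outer_rep :: "pattern \<Rightarrow> pattern \<Rightarrow> pattern \<Rightarrow> port \<Rightarrow> port" where
  "outer_rep p1 p2 p3 u = (case u of
      PT \<Rightarrow> (if pat_rel p1 Ct Cl then PA else if pat_rel p1 Ct Cr then PB else PT)
    | PL \<Rightarrow> (if pat_rel p2 Cl Ct then PA else if pat_rel p2 Cl Cr then PC else PL)
    | PR \<Rightarrow> (if pat_rel p3 Cr Ct then PB else if pat_rel p3 Cr Cl then PC else PR)
    | _ \<Rightarrow> u)"

definition inner_rep :: "pattern \<Rightarrow> pattern \<Rightarrow> pattern \<Rightarrow> port \<Rightarrow> port" where
  "inner_rep p1 p2 p3 u = (case u of
      PB \<Rightarrow> (if pat_rel p1 Cl Cr \<or> (pat_rel p2 Ct Cr \<and> pat_rel p3 Ct Cl) then PA else PB)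
    | PC \<Rightarrow> (if pat_rel p2 Ct Cr \<or> (pat_rel p1 Cl Cr \<and> pat_rel p3 Ct Cl) then PA
             else if pat_rel p3 Ct Cl then PB else PC)
    | _ \<Rightarrow> u)"

definition port_rep :: "pattern \<Rightarrow> pattern \<Rightarrow> pattern \<Rightarrow> port \<Rightarrow> port" where
  "port_rep p1 p2 p3 u = inner_rep p1 p2 p3 (outer_rep p1 p2 p3 u)"

lemma port_rep_link:
  assumes "port_link p1 p2 p3 u w"
  shows "port_rep p1 p2 p3 u = port_rep p1 p2 p3 w"
proof -
  obtain i c d where i: "i < 3" and uw: "u = corner_port i c" "w = corner_port i d"
    and cd: "pat_rel (copy_pat p1 p2 p3 i) c d"
    using assms unfolding port_link_def by blast
  consider "i = 0" | "i = 1" | "i = 2" using i by linarith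
  then show ?thesis
  proof cases
    case 1
    with cd show ?thesis unfolding uw
      by (cases c; cases d; cases p1; simp add: copy_pat_def port_rep_def outer_rep_def inner_rep_def)
  next
    case 2
    with cd show ?thesis unfolding uw
      by (cases c; cases d; cases p2; simp add: copy_pat_def port_rep_def outer_rep_def inner_rep_def)
  next
    case 3
    with cd show ?thesis unfolding uw
      by (cases c; cases d; cases p3; simp add: copy_pat_def port_rep_def outer_rep_def inner_rep_def)
  qed
qed

lemma link_outer_rep:
  "u = outer_rep p1 p2 p3 u \<or> port_link p1 p2 p3 u (outer_rep p1 p2 p3 u)"
  by (cases u) (auto simp: outer_rep_def port_link_def ex_less3 ex_corner copy_pat_def)

lemma link_inner_rep:
  "u = inner_rep p1 p2 p3 u \<or> port_link p1 p2 p3 u (inner_rep p1 p2 p3 u)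
   \<or> (\<exists>z. port_link p1 p2 p3 u z \<and> port_link p1 p2 p3 z (inner_rep p1 p2 p3 u))"
  by (cases u)
     (auto simp: inner_rep_def port_link_def ex_less3 ex_corner ex_port copy_pat_def pat_rel_commute)

lemma linked_to_rep: "(port_link p1 p2 p3)\<^sup>*\<^sup>* u (port_rep p1 p2 p3 u)"
proof -
  have "(port_link p1 p2 p3)\<^sup>*\<^sup>* u (outer_rep p1 p2 p3 u)"
    using link_outer_rep[of u] by (metis r_into_rtranclp rtranclp.rtrancl_refl)
  moreover have "(port_link p1 p2 p3)\<^sup>*\<^sup>* v (inner_rep p1 p2 p3 v)" for v
    using link_inner_rep[of v]
    by (metis r_into_rtranclp rtranclp.rtrancl_refl rtranclp.rtrancl_into_rtrancl)
  ultimately show ?thesis unfolding port_rep_def by (rule rtranclp_trans)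
qed

text \<open>The three copies together form a cycle through PA, PB, PC exactly when every copy
  connects its two corners on that interior triangle.\<close>

definition cyclic :: "pattern \<Rightarrow> pattern \<Rightarrow> pattern \<Rightarrow> bool" where
  "cyclic p1 p2 p3 \<longleftrightarrow> pat_rel p1 Cl Cr \<and> pat_rel p2 Ct Cr \<and> pat_rel p3 Ct Cl"

text \<open>This is the Euler-type
  identity behind the component count of the glued graph.\<close>

lemma nclasses_ports:
  "nclasses (\<lambda>u w. port_rep p1 p2 p3 u = port_rep p1 p2 p3 w) [PT, PA, PB, PC, PL, PR] + 3
   = nclasses (pat_rel p1) [Ct, Cl, Cr] + nclasses (pat_rel p2) [Ct, Cl, Cr]
     + nclasses (pat_rel p3) [Ct, Cl, Cr] + (if cyclic p1 p2 p3 then 1 else 0)"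
  by (cases p1; cases p2; cases p3;
      simp add: port_rep_def outer_rep_def inner_rep_def cyclic_def ex_corner)

definition glue_pattern :: "pattern \<Rightarrow> pattern \<Rightarrow> pattern \<Rightarrow> pattern" where
  "glue_pattern p1 p2 p3 = (let r = port_rep p1 p2 p3 in
     if r PT = r PL \<and> r PL = r PR then Joint
     else if r PL = r PR then LR
     else if r PT = r PL then TL
     else if r PT = r PR then TR else Sep)"

text \<open>The polynomial recurrence: given values P of the pattern sums of the copies, the pattern
  sum q of the glued graph collects every triple of patterns gluing to q, with the factor
  y - 1 for a closed cycle and d = 1/(x - 1) otherwise.\<close>

definition recur :: "real \<Rightarrow> real \<Rightarrow> (pattern \<Rightarrow> real) \<Rightarrow> pattern \<Rightarrow> real" where
  "recur y d P q = (\<Sum>p1\<in>UNIV. (\<Sum>p2\<in>UNIV. (\<Sum>p3\<in>UNIV.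
      (if glue_pattern p1 p2 p3 = q then (if cyclic p1 p2 p3 then y - 1 else d) else 0)
      * P p3) * P p2) * P p1)"

lemmas recur_expand =
  recur_def[unfolded UNIV_pattern, simplified, unfolded glue_pattern_def Let_def port_rep_def
    outer_rep_def inner_rep_def cyclic_def]

lemma recur_Joint:
  assumes "P TL = P LR" "P TR = P LR"
  shows "recur y d P Joint = (y - 1) * P Joint ^ 3 + d * (6 * P Joint ^ 2 * P LR + 3 * P Joint * P LR ^ 2)"
  using assms by (simp add: recur_expand) (simp add: algebra_simps power2_eq_square power3_eq_cube)

lemma recur_pair:
  assumes "P TL = P LR" "P TR = P LR" and "q \<in> {LR, TL, TR}"
  shows "recur y d P q = (y - 1) * P Joint ^ 2 * P LR
     + d * (P Joint ^ 2 * P Sep + 7 * P Joint * P LR ^ 2 + 2 * P Joint * P LR * P Sep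
            + 4 * P LR ^ 3 + P LR ^ 2 * P Sep)"
  using assms by (auto simp add: recur_expand) (simp_all add: algebra_simps power2_eq_square power3_eq_cube)

lemma recur_Sep:
  assumes "P TL = P LR" "P TR = P LR"
  shows "recur y d P Sep = (y - 1) * (3 * P Joint * P LR ^ 2 + P LR ^ 3)
     + d * (12 * P Joint * P LR * P Sep + 3 * P Joint * P Sep ^ 2 + 14 * P LR ^ 3
            + 24 * P LR ^ 2 * P Sep + 9 * P LR * P Sep ^ 2 + P Sep ^ 3)"
  using assms by (simp add: recur_expand) (simp add: algebra_simps power2_eq_square power3_eq_cube)

section \<open>Structure of the glued graph\<close>

definition shift :: "sgraph \<Rightarrow> nat" where
  "shift G = Suc (Max (verts G))"

definition copy_map :: "sgraph \<Rightarrow> nat \<Rightarrow> nat \<Rightarrow> nat" where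
  "copy_map G i v = (if i = 0 then v
     else if i = 1 then (if v = topv G then lftv G else shift G + v)
     else (if v = topv G then rgtv G else if v = lftv G then shift G + rgtv G else 2 * shift G + v))"

lemma glue_simps:
  "verts (glue G) = copy_map G 0 ` verts G \<union> copy_map G 1 ` verts G \<union> copy_map G 2 ` verts G"
  "edges (glue G) = map (map_prod (copy_map G 0) (copy_map G 0)) (edges G)
     @ map (map_prod (copy_map G 1) (copy_map G 1)) (edges G)
     @ map (map_prod (copy_map G 2) (copy_map G 2)) (edges G)"
  "topv (glue G) = topv G"
  "topv G \<noteq> lftv G \<Longrightarrow> lftv (glue G) = shift G + lftv G"
  "topv G \<noteq> rgtv G \<Longrightarrow> lftv G \<noteq> rgtv G \<Longrightarrow> rgtv (glue G) = 2 * shift G + rgtv G"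
proof -
  have "copy_map G 0 = (\<lambda>v. v)"
    and "copy_map G 1 = (\<lambda>v. if v = topv G then lftv G else Suc (Max (verts G)) + v)"
    and "copy_map G 2 = (\<lambda>v. if v = topv G then rgtv G
           else if v = lftv G then Suc (Max (verts G)) + rgtv G else 2 * Suc (Max (verts G)) + v)"
    by (auto simp: copy_map_def shift_def)
  moreover have "map_prod (\<lambda>v::nat. v) (\<lambda>v. v) = id" by (auto simp: map_prod_def)
  ultimately show
    "verts (glue G) = copy_map G 0 ` verts G \<union> copy_map G 1 ` verts G \<union> copy_map G 2 ` verts G"
    "edges (glue G) = map (map_prod (copy_map G 0) (copy_map G 0)) (edges G)
       @ map (map_prod (copy_map G 1) (copy_map G 1)) (edges G)
       @ map (map_prod (copy_map G 2) (copy_map G 2)) (edges G)"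
    "topv (glue G) = topv G"
    unfolding glue_def Let_def by simp_all
  show "topv G \<noteq> lftv G \<Longrightarrow> lftv (glue G) = shift G + lftv G"
    "topv G \<noteq> rgtv G \<Longrightarrow> lftv G \<noteq> rgtv G \<Longrightarrow> rgtv (glue G) = 2 * shift G + rgtv G"
    unfolding glue_def Let_def by (simp_all add: shift_def)
qed

lemma len_glue: "length (edges (glue G)) = 3 * length (edges G)"
  by (simp add: glue_simps)

text \<open>Vertices of G lie below shift G, so the shifted copies do not collide except at the
  identified outmost vertices; in particular every copy_map G i is injective.\<close>

lemma less_shift: "wf_sgraph G \<Longrightarrow> v \<in> verts G \<Longrightarrow> v < shift G"
  unfolding wf_sgraph_def shift_def by (simp add: le_imp_less_Suc)

lemma outmost_less_shift:
  assumes "wf_sgraph G"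
  shows "topv G < shift G" "lftv G < shift G" "rgtv G < shift G"
  using less_shift[OF assms] assms unfolding wf_sgraph_def by auto

lemma outmost_distinct:
  assumes "wf_sgraph G"
  shows "topv G \<noteq> lftv G" "topv G \<noteq> rgtv G" "lftv G \<noteq> rgtv G"
  using assms unfolding wf_sgraph_def by auto

lemma copy_map_inj:
  assumes G: "wf_sgraph G" and i: "i < 3"
  shows "inj (copy_map G i)"
proof (rule injI)
  fix u v assume "copy_map G i u = copy_map G i v"
  then show "u = v" using i outmost_less_shift[OF G] outmost_distinct[OF G] unfolding copy_map_def
    by (auto split: if_splits simp: less_Suc_eq numeral_3_eq_3)
qed

fun port_vertex :: "sgraph \<Rightarrow> port \<Rightarrow> nat" where
  "port_vertex G PT = topv G" | "port_vertex G PA = lftv G" | "port_vertex G PB = rgtv G"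
| "port_vertex G PC = shift G + rgtv G" | "port_vertex G PL = shift G + lftv G"
| "port_vertex G PR = 2 * shift G + rgtv G"

fun corner_vertex :: "sgraph \<Rightarrow> corner \<Rightarrow> nat" where
  "corner_vertex G Ct = topv G" | "corner_vertex G Cl = lftv G" | "corner_vertex G Cr = rgtv G"

lemma corner_vertex_in: "wf_sgraph G \<Longrightarrow> corner_vertex G c \<in> verts G"
  by (cases c) (auto simp: wf_sgraph_def)

lemma range_corner_vertex: "range (corner_vertex G) = corner_vertex G ` set [Ct, Cl, Cr]"
  by (simp add: UNIV_corner)

lemma copy_map_corner:
  "wf_sgraph G \<Longrightarrow> copy_map G i (corner_vertex G c) = port_vertex G (corner_port i c)"
  unfolding wf_sgraph_def by (cases c) (auto simp: copy_map_def)

lemma port_vertex_inj: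
  assumes G: "wf_sgraph G"
  shows "inj (port_vertex G)"
proof (rule injI)
  fix p q assume "port_vertex G p = port_vertex G q"
  then show "p = q" using outmost_less_shift[OF G] outmost_distinct[OF G] by (cases p; cases q; auto)
qed

lemma copy_map_port_iff:
  assumes G: "wf_sgraph G" and i: "i < 3" and v: "v \<in> verts G"
  shows "copy_map G i v \<in> range (port_vertex G) \<longleftrightarrow> v \<in> range (corner_vertex G)"
proof
  assume "copy_map G i v \<in> range (port_vertex G)"
  then obtain p where p: "copy_map G i v = port_vertex G p" by auto
  have "v = topv G \<or> v = lftv G \<or> v = rgtv G"
    using p i outmost_less_shift[OF G] outmost_distinct[OF G] less_shift[OF G v] unfolding copy_map_def
    by (cases p) (auto split: if_splits simp: less_Suc_eq numeral_3_eq_3)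
  then show "v \<in> range (corner_vertex G)" by (metis corner_vertex.simps rangeI)
qed (use copy_map_corner[OF G] in auto)

lemma copy_overlap:
  assumes G: "wf_sgraph G" and ij: "i < 3" "j < 3" "i \<noteq> j"
  shows "copy_map G i ` verts G \<inter> copy_map G j ` verts G \<subseteq> range (port_vertex G)"
proof
  fix w assume "w \<in> copy_map G i ` verts G \<inter> copy_map G j ` verts G"
  then obtain u v where uv: "u \<in> verts G" "v \<in> verts G" "w = copy_map G i u" "w = copy_map G j v"
    by auto
  have "u = topv G \<or> u = lftv G \<or> u = rgtv G"
    using uv ij outmost_less_shift[OF G] outmost_distinct[OF G] less_shift[OF G uv(1)]
      less_shift[OF G uv(2)] unfolding copy_map_def
    by (auto split: if_splits simp: less_Suc_eq numeral_3_eq_3)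
  then have "u \<in> range (corner_vertex G)" by (metis corner_vertex.simps rangeI)
  then show "w \<in> range (port_vertex G)" using copy_map_port_iff[OF G ij(1) uv(1)] uv by auto
qed

lemma wf_glue:
  assumes G: "wf_sgraph G"
  shows "wf_sgraph (glue G)"
proof -
  note d = outmost_distinct[OF G]
  have "copy_map G 1 (lftv G) = shift G + lftv G" "copy_map G 2 (rgtv G) = 2 * shift G + rgtv G"
    "copy_map G 0 (topv G) = topv G" using d by (auto simp: copy_map_def)
  then have "topv G \<in> verts (glue G)" "shift G + lftv G \<in> verts (glue G)"
    "2 * shift G + rgtv G \<in> verts (glue G)"
    using G unfolding glue_simps wf_sgraph_def by (metis UnI1 UnI2 image_eqI)+
  then show ?thesis
    using G outmost_less_shift[OF G] d
    unfolding wf_sgraph_def glue_simps(1,2,3) glue_simps(4)[OF d(1)] glue_simps(5)[OF d(2,3)]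
    by auto
qed

text \<open>Copy i as a piece of the glued graph: its vertices and, for a spanning subgraph A of
  glue G, its edges. part G A i is the set of edges of copy i in A, indexed as edges of G.\<close>

definition part :: "sgraph \<Rightarrow> nat set \<Rightarrow> nat \<Rightarrow> nat set" where
  "part G A i = {j. j < length (edges G) \<and> j + i * length (edges G) \<in> A}"

definition copy_verts :: "sgraph \<Rightarrow> nat \<Rightarrow> nat set" where
  "copy_verts G i = copy_map G i ` verts G"

definition copy_adj :: "sgraph \<Rightarrow> nat set \<Rightarrow> nat \<Rightarrow> (nat \<times> nat) set" where
  "copy_adj G A i = map_prod (copy_map G i) (copy_map G i) ` adj G (part G A i)"

lemma part_sub: "part G A i \<subseteq> {..<length (edges G)}"
  unfolding part_def by auto

lemma verts_glue: "verts (glue G) = (\<Union>i\<in>{0,1,2}. copy_verts G i)"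
  by (auto simp: glue_simps copy_verts_def)

lemma port_vertex_in_glue:
  assumes G: "wf_sgraph G"
  shows "port_vertex G u \<in> verts (glue G)"
proof -
  obtain i c where i: "i < 3" and c: "corner_port i c = u" using port_is_corner by blast
  then have "port_vertex G u \<in> copy_verts G i"
    using copy_map_corner[OF G] corner_vertex_in[OF G] unfolding copy_verts_def by (metis image_eqI)
  then show ?thesis using i unfolding verts_glue by (auto simp: eval_nat_numeral less_Suc_eq)
qed

lemma copy_ports:
  assumes G: "wf_sgraph G" and i: "i < 3"
  shows "copy_verts G i \<inter> range (port_vertex G) = port_vertex G ` range (corner_port i)"
proof
  show "copy_verts G i \<inter> range (port_vertex G) \<subseteq> port_vertex G ` range (corner_port i)"
  proof
    fix w assume w: "w \<in> copy_verts G i \<inter> range (port_vertex G)"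
    then obtain v where v: "v \<in> verts G" "w = copy_map G i v" unfolding copy_verts_def by auto
    then have "v \<in> range (corner_vertex G)" using copy_map_port_iff[OF G i v(1)] w by auto
    then show "w \<in> port_vertex G ` range (corner_port i)" using v copy_map_corner[OF G] by auto
  qed
next
  show "port_vertex G ` range (corner_port i) \<subseteq> copy_verts G i \<inter> range (port_vertex G)"
    using copy_map_corner[OF G] corner_vertex_in[OF G] unfolding copy_verts_def
    by (auto simp del: corner_port.simps) (metis image_eqI)
qed

text \<open>Counting vertices: the three copies share exactly the three ports PA, PB, PC.\<close>

lemma card_verts_glue:
  assumes G: "wf_sgraph G"
  shows "card (verts (glue G)) + 3 = 3 * card (verts G)"
proof -
  have fin: "finite (verts G)" using G unfolding wf_sgraph_def by auto
  have card_copy: "card (copy_verts G i) = card (verts G)" if "i < 3" for i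
    unfolding copy_verts_def by (rule card_image) (meson copy_map_inj[OF G that] inj_on_subset subset_UNIV)
  have fin_copy: "finite (copy_verts G i)" for i unfolding copy_verts_def using fin by auto
  have inj: "inj (port_vertex G)" by (rule port_vertex_inj[OF G])
  have shared: "copy_verts G i \<inter> copy_verts G j = port_vertex G ` (range (corner_port i) \<inter> range (corner_port j))"
    if "i < 3" "j < 3" "i \<noteq> j" for i j
  proof -
    have "copy_verts G i \<inter> copy_verts G j
        = (copy_verts G i \<inter> range (port_vertex G)) \<inter> (copy_verts G j \<inter> range (port_vertex G))"
      using copy_overlap[OF G that] unfolding copy_verts_def by blast
    then show ?thesis unfolding copy_ports[OF G that(1)] copy_ports[OF G that(2)] image_Int[OF inj] .
  qed
  have "range (corner_port 0) \<inter> range (corner_port 1) = {PA}"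
    "range (corner_port 0) \<inter> range (corner_port 2) = {PB}"
    "range (corner_port 1) \<inter> range (corner_port 2) = {PC}"
    by (auto simp: UNIV_corner)
  then have s01: "copy_verts G 0 \<inter> copy_verts G 1 = {port_vertex G PA}"
    and s012: "(copy_verts G 0 \<union> copy_verts G 1) \<inter> copy_verts G 2 = {port_vertex G PB, port_vertex G PC}"
    using shared[of 0 1] shared[of 0 2] shared[of 1 2] by auto
  have "port_vertex G PB \<noteq> port_vertex G PC" using inj by (metis injD port.distinct)
  then have "card {port_vertex G PB, port_vertex G PC} = 2" by simp
  then have "card (copy_verts G 0 \<union> copy_verts G 1) + card (copy_verts G 2)
      = card (copy_verts G 0 \<union> copy_verts G 1 \<union> copy_verts G 2) + 2"
    using card_Un_Int[of "copy_verts G 0 \<union> copy_verts G 1" "copy_verts G 2"] fin_copy s012 by simp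
  moreover have "card (copy_verts G 0) + card (copy_verts G 1) = card (copy_verts G 0 \<union> copy_verts G 1) + 1"
    using card_Un_Int[OF fin_copy fin_copy, of 0 1] s01 by simp
  moreover have "verts (glue G) = copy_verts G 0 \<union> copy_verts G 1 \<union> copy_verts G 2"
    unfolding verts_glue by auto
  ultimately show ?thesis using card_copy[of 0] card_copy[of 1] card_copy[of 2] by simp
qed

lemma nth_edges_glue:
  assumes "j < length (edges G)" "i < 3"
  shows "edges (glue G) ! (j + i * length (edges G)) = map_prod (copy_map G i) (copy_map G i) (edges G ! j)"
proof -
  have "i = 0 \<or> i = 1 \<or> i = 2" using assms(2) by auto
  then show ?thesis unfolding glue_simps using assms by (auto simp: nth_append)
qed

lemma edge_index_split:
  fixes k m :: nat
  assumes "k < 3 * m"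
  shows "\<exists>i<3. \<exists>j<m. k = j + i * m"
proof -
  have "m > 0" using assms by auto
  then show ?thesis using assms
    by (intro exI[of _ "k div m"] conjI exI[of _ "k mod m"])
       (auto simp: less_mult_imp_div_less mult.commute)
qed

lemma edge_index_less:
  assumes "j < m" "i < (3::nat)"
  shows "j + i * m < 3 * m"
proof -
  have "i * m \<le> 2 * m" using assms(2) by simp
  then show ?thesis using assms(1) by linarith
qed

lemma adj_glue: "adj (glue G) A = (\<Union>i\<in>{0,1,2}. copy_adj G A i)"
proof (rule set_eqI, rule iffI)
  let ?m = "length (edges G)"
  fix uv assume "uv \<in> adj (glue G) A"
  then obtain u v k where uv: "uv = (u, v)" and k: "k \<in> A" "k < 3 * ?m"
    and e: "edges (glue G) ! k = (u, v) \<or> edges (glue G) ! k = (v, u)"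
    unfolding adj_def len_glue by auto
  obtain i j where ij: "i < 3" "j < ?m" "k = j + i * ?m" using edge_index_split[OF k(2)] by blast
  have jp: "j \<in> part G A i" using k ij unfolding part_def by auto
  obtain a b where ab: "edges G ! j = (a, b)" by fastforce
  have "(a, b) \<in> adj G (part G A i)" "(b, a) \<in> adj G (part G A i)"
    unfolding adj_def using jp ij ab by auto
  moreover have "(u, v) = map_prod (copy_map G i) (copy_map G i) (a, b)
      \<or> (u, v) = map_prod (copy_map G i) (copy_map G i) (b, a)"
    using e nth_edges_glue[OF ij(2,1)] ij(3) ab by auto
  ultimately have "uv \<in> copy_adj G A i" unfolding copy_adj_def uv by blast
  moreover have "i \<in> {0, 1, 2}" using ij by auto
  ultimately show "uv \<in> (\<Union>i\<in>{0,1,2}. copy_adj G A i)" by blast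
next
  let ?m = "length (edges G)"
  fix uv assume "uv \<in> (\<Union>i\<in>{0,1,2}. copy_adj G A i)"
  then obtain i where "i \<in> {0, 1, 2}" and "uv \<in> copy_adj G A i" by blast
  then obtain a b where i: "i < 3" and ab: "(a, b) \<in> adj G (part G A i)"
    and uv: "uv = (copy_map G i a, copy_map G i b)"
    unfolding copy_adj_def by auto
  from ab obtain j where j: "j \<in> part G A i" "edges G ! j = (a, b) \<or> edges G ! j = (b, a)"
    unfolding adj_def by auto
  have jm: "j < ?m" "j + i * ?m \<in> A" using j unfolding part_def by auto
  have "edges (glue G) ! (j + i * ?m) = (copy_map G i a, copy_map G i b)
      \<or> edges (glue G) ! (j + i * ?m) = (copy_map G i b, copy_map G i a)"
    using nth_edges_glue[OF jm(1) i] j(2) by auto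
  then show "uv \<in> adj (glue G) A"
    unfolding adj_def len_glue uv using jm edge_index_less[OF jm(1) i] by auto
qed

lemma pieces_glue:
  assumes G: "wf_sgraph G"
  shows "pieces {0, 1, 2} (copy_verts G) (copy_adj G A) (range (port_vertex G))"
proof
  fix i :: nat
  show "copy_adj G A i \<subseteq> copy_verts G i \<times> copy_verts G i"
    unfolding copy_adj_def copy_verts_def using adj_sub[OF G] by auto
next
  fix i j :: nat assume "i \<in> {0, 1, 2}" "j \<in> {0, 1, 2}" "i \<noteq> j"
  then have "i < 3" "j < 3" "i \<noteq> j" by auto
  then show "copy_verts G i \<inter> copy_verts G j \<subseteq> range (port_vertex G)"
    unfolding copy_verts_def by (rule copy_overlap[OF G])
qed

section \<open>Components of the glued graph\<close>

definition pat_of :: "sgraph \<Rightarrow> nat set \<Rightarrow> pattern" where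
  "pat_of G A = (if conn G A (topv G) (lftv G) \<and> conn G A (lftv G) (rgtv G) then Joint
     else if conn G A (lftv G) (rgtv G) then LR
     else if conn G A (topv G) (lftv G) then TL
     else if conn G A (topv G) (rgtv G) then TR else Sep)"

lemma conn_pattern: "conn G A (corner_vertex G c) (corner_vertex G d) \<longleftrightarrow> pat_rel (pat_of G A) c d"
  by (cases c; cases d) (auto simp: pat_of_def conn_refl dest: conn_sym intro: conn_trans)

lemma conn_pattern_rtrancl:
  "(corner_vertex G c, corner_vertex G d) \<in> (adj G A)\<^sup>* \<longleftrightarrow> pat_rel (pat_of G A) c d"
  using conn_pattern unfolding conn_def .

definition inner_comps :: "sgraph \<Rightarrow> nat set \<Rightarrow> nat" where
  "inner_comps G A = card {C \<in> rclass (verts G) (adj G A) ` verts G. C \<inter> range (corner_vertex G) = {}}"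

lemma ncomp_corners:
  assumes G: "wf_sgraph G"
  shows "ncomp G A = inner_comps G A + nclasses (pat_rel (pat_of G A)) [Ct, Cl, Cr]"
proof -
  have corners: "range (corner_vertex G) \<subseteq> verts G" using corner_vertex_in[OF G] by auto
  have "card (rclass (verts G) (adj G A) ` range (corner_vertex G))
      = card ((rclass (verts G) (adj G A) \<circ> corner_vertex G) ` set [Ct, Cl, Cr])"
    unfolding range_corner_vertex image_comp ..
  also have "\<dots> = nclasses (pat_rel (pat_of G A)) [Ct, Cl, Cr]"
    by (rule card_image_nclasses)
       (simp add: rclass_eq_conn[OF G corner_vertex_in[OF G] corner_vertex_in[OF G]] conn_pattern)
  finally show ?thesis
    unfolding ncomp_rclass inner_comps_def
    using card_rclasses_split[OF _ adj_sub[OF G] adj_sym corners] G by (simp add: wf_sgraph_def)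
qed

definition glue_rep :: "sgraph \<Rightarrow> nat set \<Rightarrow> port \<Rightarrow> port" where
  "glue_rep G A = port_rep (pat_of G (part G A 0)) (pat_of G (part G A 1)) (pat_of G (part G A 2))"

definition glue_cyclic :: "sgraph \<Rightarrow> nat set \<Rightarrow> bool" where
  "glue_cyclic G A \<longleftrightarrow> cyclic (pat_of G (part G A 0)) (pat_of G (part G A 1)) (pat_of G (part G A 2))"

lemma copy_pat_part:
  "i < 3 \<Longrightarrow> copy_pat (pat_of G (part G A 0)) (pat_of G (part G A 1)) (pat_of G (part G A 2)) i
     = pat_of G (part G A i)"
  by (auto simp: copy_pat_def eval_nat_numeral less_Suc_eq)

lemma conn_glue_link:
  assumes G: "wf_sgraph G"
    and "port_link (pat_of G (part G A 0)) (pat_of G (part G A 1)) (pat_of G (part G A 2)) u w"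
  shows "conn (glue G) A (port_vertex G u) (port_vertex G w)"
proof -
  obtain i c d where i: "i < 3" and uw: "u = corner_port i c" "w = corner_port i d"
    and "pat_rel (copy_pat (pat_of G (part G A 0)) (pat_of G (part G A 1)) (pat_of G (part G A 2)) i) c d"
    using assms(2) unfolding port_link_def by blast
  then have "pat_rel (pat_of G (part G A i)) c d" using copy_pat_part[OF i] by simp
  then have "(corner_vertex G c, corner_vertex G d) \<in> (adj G (part G A i))\<^sup>*"
    using conn_pattern_rtrancl by blast
  then have "(copy_map G i (corner_vertex G c), copy_map G i (corner_vertex G d)) \<in> (copy_adj G A i)\<^sup>*"
    unfolding copy_adj_def by (rule rtrancl_map_prod)
  moreover have "copy_adj G A i \<subseteq> adj (glue G) A"
    using i unfolding adj_glue by (auto simp: eval_nat_numeral less_Suc_eq)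
  ultimately show ?thesis
    unfolding conn_def uw copy_map_corner[OF G, symmetric] using rtrancl_mono by blast
qed

lemma conn_glue_same_rep:
  assumes G: "wf_sgraph G" and rep: "glue_rep G A u = glue_rep G A w"
  shows "conn (glue G) A (port_vertex G u) (port_vertex G w)"
proof -
  have to_rep: "conn (glue G) A (port_vertex G v) (port_vertex G (glue_rep G A v))" for v
    using linked_to_rep unfolding glue_rep_def
  proof (induct rule: rtranclp_induct)
    case (step y z)
    then show ?case using conn_trans[OF step(3) conn_glue_link[OF G step(2)]] by simp
  qed (rule conn_refl)
  show ?thesis using to_rep[of u] to_rep[of w] rep conn_sym conn_trans by metis
qed

lemma glue_rep_copy:
  assumes G: "wf_sgraph G" and i: "i < 3"
    and cd: "(port_vertex G (corner_port i c), port_vertex G (corner_port i d)) \<in> (copy_adj G A i)\<^sup>*"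
  shows "glue_rep G A (corner_port i c) = glue_rep G A (corner_port i d)"
proof -
  have "(copy_map G i (corner_vertex G c), copy_map G i (corner_vertex G d)) \<in> (copy_adj G A i)\<^sup>*"
    using cd unfolding copy_map_corner[OF G] .
  then have "pat_rel (pat_of G (part G A i)) c d"
    unfolding copy_adj_def rtrancl_map_prod_iff[OF copy_map_inj[OF G i]] conn_pattern_rtrancl .
  then have "pat_rel (copy_pat (pat_of G (part G A 0)) (pat_of G (part G A 1)) (pat_of G (part G A 2)) i) c d"
    using copy_pat_part[OF i] by simp
  then have "port_link (pat_of G (part G A 0)) (pat_of G (part G A 1)) (pat_of G (part G A 2))
      (corner_port i c) (corner_port i d)"
    unfolding port_link_def using i by blast
  then show ?thesis unfolding glue_rep_def by (rule port_rep_link)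
qed

text \<open>Conversely, connected ports have the same representative: the relation "same
  representative" on the ports is transitive and contains all connections inside the copies,
  so by the gluing lemma for pieces it contains all connections between ports.\<close>

lemma same_rep_conn_glue:
  assumes G: "wf_sgraph G" and uw: "conn (glue G) A (port_vertex G u) (port_vertex G w)"
  shows "glue_rep G A u = glue_rep G A w"
proof -
  interpret pieces "{0, 1, 2}" "copy_verts G" "copy_adj G A" "range (port_vertex G)"
    by (rule pieces_glue[OF G])
  define E where "E = {(port_vertex G x, port_vertex G y) | x y. glue_rep G A x = glue_rep G A y}"
  have inj: "inj (port_vertex G)" by (rule port_vertex_inj[OF G])
  have trans: "trans E"
  proof (rule transI)
    fix a b c assume "(a, b) \<in> E" "(b, c) \<in> E"
    then obtain x y y' z where "a = port_vertex G x" "b = port_vertex G y" "glue_rep G A x = glue_rep G A y"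
      "b = port_vertex G y'" "c = port_vertex G z" "glue_rep G A y' = glue_rep G A z"
      unfolding E_def by blast
    moreover have "y = y'" using inj \<open>b = port_vertex G y\<close> \<open>b = port_vertex G y'\<close> by (metis injD)
    ultimately show "(a, c) \<in> E" unfolding E_def by auto
  qed
  have ports_in: "range (port_vertex G) \<subseteq> Dom"
    unfolding Dom_def verts_glue[symmetric] using port_vertex_in_glue[OF G] by auto
  have within_copy: "(p, q) \<in> E"
    if i: "i \<in> {0, 1, 2}" and p: "p \<in> range (port_vertex G)" and q: "q \<in> range (port_vertex G)"
      and pW: "p \<in> copy_verts G i" and pq: "(p, q) \<in> (copy_adj G A i)\<^sup>*" for i p q
  proof -
    have i3: "i < 3" using i by auto
    have qW: "q \<in> copy_verts G i" using rtrancl_stays[OF pq piece_rel[OF i] pW] .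
    obtain c d where c: "p = port_vertex G (corner_port i c)" and d: "q = port_vertex G (corner_port i d)"
      using p q pW qW copy_ports[OF G i3] by blast
    have "glue_rep G A (corner_port i c) = glue_rep G A (corner_port i d)"
      using glue_rep_copy[OF G i3] pq unfolding c d .
    then show ?thesis unfolding E_def c d mem_Collect_eq by metis
  qed
  have path: "(port_vertex G u, port_vertex G w) \<in> Rel\<^sup>*"
    using uw unfolding Rel_def adj_glue[symmetric] conn_def .
  have "(port_vertex G u, port_vertex G w) \<in> E"
    by (rule ports_connected[OF ports_in _ trans path]) (auto intro: within_copy)
  then show ?thesis unfolding E_def using inj by (auto dest: injD)
qed

lemma conn_glue_ports:
  assumes G: "wf_sgraph G"
  shows "conn (glue G) A (port_vertex G u) (port_vertex G w) \<longleftrightarrow> glue_rep G A u = glue_rep G A w"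
  using conn_glue_same_rep[OF G] same_rep_conn_glue[OF G] by blast

lemma inner_comps_glue:
  assumes G: "wf_sgraph G"
  shows "card {C \<in> rclass (verts (glue G)) (adj (glue G) A) ` verts (glue G). C \<inter> range (port_vertex G) = {}}
       = inner_comps G (part G A 0) + inner_comps G (part G A 1) + inner_comps G (part G A 2)"
proof -
  interpret pieces "{0, 1, 2}" "copy_verts G" "copy_adj G A" "range (port_vertex G)"
    by (rule pieces_glue[OF G])
  have "card {C \<in> rclass Dom Rel ` Dom. C \<inter> range (port_vertex G) = {}}
      = (\<Sum>i\<in>{0, 1, 2}. card {C \<in> rclass (copy_verts G i) (copy_adj G A i) ` copy_verts G i.
                                C \<inter> range (port_vertex G) = {}})"
    by (rule card_portfree_classes) (use G in \<open>auto simp: copy_verts_def wf_sgraph_def\<close>)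
  also have "\<dots> = (\<Sum>i\<in>{0, 1, 2}. inner_comps G (part G A i))"
  proof (rule sum.cong[OF refl])
    fix i :: nat assume "i \<in> {0, 1, 2}"
    then have i: "i < 3" by auto
    show "card {C \<in> rclass (copy_verts G i) (copy_adj G A i) ` copy_verts G i.
                  C \<inter> range (port_vertex G) = {}} = inner_comps G (part G A i)"
      unfolding copy_verts_def copy_adj_def inner_comps_def
      by (rule card_rclasses_avoiding_map[OF copy_map_inj[OF G i]]) (rule copy_map_port_iff[OF G i])
  qed
  finally show ?thesis unfolding Rel_def Dom_def adj_glue verts_glue by simp
qed

lemma port_classes_glue:
  assumes G: "wf_sgraph G"
  shows "card (rclass (verts (glue G)) (adj (glue G) A) ` range (port_vertex G))
       = nclasses (\<lambda>u w. glue_rep G A u = glue_rep G A w) [PT, PA, PB, PC, PL, PR]"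
proof -
  have ports: "range (port_vertex G) = port_vertex G ` set [PT, PA, PB, PC, PL, PR]"
    by (simp add: UNIV_port)
  show ?thesis
    unfolding ports image_comp
  proof (rule card_image_nclasses)
    fix p q
    show "(rclass (verts (glue G)) (adj (glue G) A) \<circ> port_vertex G) p
        = (rclass (verts (glue G)) (adj (glue G) A) \<circ> port_vertex G) q
        \<longleftrightarrow> glue_rep G A p = glue_rep G A q"
      using rclass_eq_conn[OF wf_glue[OF G] port_vertex_in_glue[OF G] port_vertex_in_glue[OF G]]
        conn_glue_ports[OF G] by simp
  qed
qed

lemma ncomp_glue:
  assumes G: "wf_sgraph G"
  shows "ncomp (glue G) A + 3 = ncomp G (part G A 0) + ncomp G (part G A 1) + ncomp G (part G A 2)
           + (if glue_cyclic G A then 1 else 0)"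
proof -
  have G': "wf_sgraph (glue G)" by (rule wf_glue[OF G])
  have "ncomp (glue G) A
      = card {C \<in> rclass (verts (glue G)) (adj (glue G) A) ` verts (glue G). C \<inter> range (port_vertex G) = {}}
        + card (rclass (verts (glue G)) (adj (glue G) A) ` range (port_vertex G))"
    unfolding ncomp_rclass
    by (rule card_rclasses_split[OF _ adj_sub[OF G'] adj_sym])
       (use G' port_vertex_in_glue[OF G] in \<open>auto simp: wf_sgraph_def\<close>)
  moreover have "nclasses (\<lambda>u w. glue_rep G A u = glue_rep G A w) [PT, PA, PB, PC, PL, PR] + 3
      = nclasses (pat_rel (pat_of G (part G A 0))) [Ct, Cl, Cr]
        + nclasses (pat_rel (pat_of G (part G A 1))) [Ct, Cl, Cr]
        + nclasses (pat_rel (pat_of G (part G A 2))) [Ct, Cl, Cr] + (if glue_cyclic G A then 1 else 0)"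
    unfolding glue_rep_def glue_cyclic_def by (rule nclasses_ports)
  ultimately show ?thesis
    unfolding inner_comps_glue[OF G] port_classes_glue[OF G]
    using ncomp_corners[OF G, of "part G A 0"] ncomp_corners[OF G, of "part G A 1"]
      ncomp_corners[OF G, of "part G A 2"] by linarith
qed

lemma pat_glue:
  assumes G: "wf_sgraph G"
  shows "pat_of (glue G) A = glue_pattern (pat_of G (part G A 0)) (pat_of G (part G A 1)) (pat_of G (part G A 2))"
proof -
  note d = outmost_distinct[OF G]
  have outmost: "topv (glue G) = port_vertex G PT" "lftv (glue G) = port_vertex G PL"
    "rgtv (glue G) = port_vertex G PR"
    using glue_simps(3) glue_simps(4)[OF d(1)] glue_simps(5)[OF d(2,3)] by auto
  show ?thesis
    unfolding pat_of_def[of "glue G"] outmost conn_glue_ports[OF G] glue_pattern_def Let_def glue_rep_def ..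
qed

section \<open>Weights of spanning subgraphs of the glued graph\<close>

definition join :: "nat \<Rightarrow> nat set \<Rightarrow> nat set \<Rightarrow> nat set \<Rightarrow> nat set" where
  "join m B0 B1 B2 = B0 \<union> (\<lambda>j. j + m) ` B1 \<union> (\<lambda>j. j + 2 * m) ` B2"

lemma part_join:
  assumes "B0 \<subseteq> {..<m}" "B1 \<subseteq> {..<m}" "B2 \<subseteq> {..<m}" "m = length (edges G)"
  shows "part G (join m B0 B1 B2) 0 = B0" "part G (join m B0 B1 B2) 1 = B1"
    "part G (join m B0 B1 B2) 2 = B2"
  using assms unfolding part_def join_def by (auto simp: subset_iff)

lemma join_part:
  assumes A: "A \<subseteq> {..<3 * m}" and m: "m = length (edges G)"
  shows "join m (part G A 0) (part G A 1) (part G A 2) = A"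
proof
  show "join m (part G A 0) (part G A 1) (part G A 2) \<subseteq> A"
    unfolding join_def part_def m by auto
next
  show "A \<subseteq> join m (part G A 0) (part G A 1) (part G A 2)"
  proof
    fix k assume k: "k \<in> A"
    then obtain i j where ij: "i < 3" "j < m" "k = j + i * m"
      using edge_index_split[of k m] A by blast
    then have "j \<in> part G A i" using k unfolding part_def m by auto
    moreover have "i = 0 \<or> i = 1 \<or> i = 2" using ij(1) by auto
    ultimately show "k \<in> join m (part G A 0) (part G A 1) (part G A 2)"
      unfolding join_def using ij(3) by auto
  qed
qed

lemma join_sub: "B0 \<subseteq> {..<m} \<Longrightarrow> B1 \<subseteq> {..<m} \<Longrightarrow> B2 \<subseteq> {..<m} \<Longrightarrow> join m B0 B1 B2 \<subseteq> {..<3 * m}"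
  unfolding join_def by force

lemma card_parts:
  assumes A: "A \<subseteq> {..<3 * length (edges G)}"
  shows "card A = card (part G A 0) + card (part G A 1) + card (part G A 2)"
proof -
  let ?m = "length (edges G)"
  have f: "finite (part G A i)" for i by (rule finite_subset[OF part_sub]) simp
  have "card ((\<lambda>j. j + ?m) ` part G A 1) = card (part G A 1)"
    "card ((\<lambda>j. j + 2 * ?m) ` part G A 2) = card (part G A 2)"
    by (auto intro!: card_image simp: inj_on_def)
  moreover have "part G A 0 \<inter> (\<lambda>j. j + ?m) ` part G A 1 = {}"
    "(part G A 0 \<union> (\<lambda>j. j + ?m) ` part G A 1) \<inter> (\<lambda>j. j + 2 * ?m) ` part G A 2 = {}"
    using part_sub[of G A 0] part_sub[of G A 1] part_sub[of G A 2] by auto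
  ultimately have "card (join ?m (part G A 0) (part G A 1) (part G A 2))
      = card (part G A 0) + card (part G A 1) + card (part G A 2)"
    unfolding join_def using f by (simp add: card_Un_disjoint)
  then show ?thesis using join_part[OF A refl] by simp
qed

text \<open>The graphs for which the weight of every spanning subgraph has the closed form below:
  G is connected, and the rank of an edge set never exceeds its size. The latter holds for
  every graph; here it is propagated along the Sierpinski construction.\<close>

definition admissible :: "sgraph \<Rightarrow> bool" where
  "admissible G \<longleftrightarrow> wf_sgraph G \<and> ncomp G {..<length (edges G)} = 1
     \<and> (\<forall>A \<subseteq> {..<length (edges G)}. card (verts G) \<le> card A + ncomp G A)"

lemma weight_formula:
  assumes adm: "admissible G" and A: "A \<subseteq> {..<length (edges G)}"
  shows "weight G A x y = (x - 1) ^ (ncomp G A - 1) * (y - 1) ^ (card A + ncomp G A - card (verts G))"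
proof -
  have G: "wf_sgraph G" using adm unfolding admissible_def by auto
  have k: "1 \<le> ncomp G A" "ncomp G A \<le> card (verts G)" using ncomp_pos[OF G] ncomp_le_card[OF G] by auto
  have full: "ncomp G {..<length (edges G)} = 1" using adm unfolding admissible_def by auto
  have le: "card (verts G) \<le> card A + ncomp G A" using adm A unfolding admissible_def by auto
  have "rk G {..<length (edges G)} - rk G A = ncomp G A - 1"
    unfolding rk_def full using k by linarith
  moreover have "nul G A = card A + ncomp G A - card (verts G)"
    unfolding nul_def rk_def using k le by linarith
  ultimately show ?thesis unfolding weight_def by simp
qed

text \<open>Gluing preserves admissibility: the glued graph is connected because the three connected
  copies close a cycle, and the rank bound follows from the component count.\<close>

lemma pat_connected:
  assumes G: "wf_sgraph G" and k: "ncomp G A = 1"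
  shows "pat_of G A = Joint"
  using ncomp_one_conn[OF G k] G unfolding pat_of_def wf_sgraph_def by auto

lemma part_all: "i < 3 \<Longrightarrow> part G {..<3 * length (edges G)} i = {..<length (edges G)}"
  unfolding part_def using edge_index_less by auto

lemma admissible_glue:
  assumes adm: "admissible G"
  shows "admissible (glue G)"
proof -
  have G: "wf_sgraph G" using adm unfolding admissible_def by auto
  let ?m = "length (edges G)"
  have full: "ncomp G {..<?m} = 1" using adm unfolding admissible_def by auto
  have "ncomp (glue G) {..<3 * ?m} + 3 = 1 + 1 + 1 + 1"
    using ncomp_glue[OF G, of "{..<3 * ?m}"] part_all[of _ G] full pat_connected[OF G full]
    by (simp add: glue_cyclic_def cyclic_def)
  then have connected: "ncomp (glue G) {..<length (edges (glue G))} = 1" unfolding len_glue by simp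
  have "card (verts (glue G)) \<le> card A + ncomp (glue G) A"
    if A: "A \<subseteq> {..<length (edges (glue G))}" for A
  proof -
    have A': "A \<subseteq> {..<3 * ?m}" using A len_glue by metis
    have rank: "card (verts G) \<le> card (part G A i) + ncomp G (part G A i)" for i
      using adm part_sub[of G A i] unfolding admissible_def by blast
    have "ncomp G (part G A 0) + ncomp G (part G A 1) + ncomp G (part G A 2) \<le> ncomp (glue G) A + 3"
      using ncomp_glue[OF G, of A] by simp
    then show ?thesis using rank[of 0] rank[of 1] rank[of 2] card_parts[OF A'] card_verts_glue[OF G]
      by linarith
  qed
  then show ?thesis unfolding admissible_def using wf_glue[OF G] connected by blast
qed

lemma weight_glue:
  assumes adm: "admissible G" and A: "A \<subseteq> {..<3 * length (edges G)}"
  shows "(if glue_cyclic G A then 1 else x - 1) * weight (glue G) A x y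
       = (if glue_cyclic G A then y - 1 else 1)
         * (weight G (part G A 0) x y * weight G (part G A 1) x y * weight G (part G A 2) x y)"
proof -
  have G: "wf_sgraph G" using adm unfolding admissible_def by auto
  let ?V = "card (verts G)"
  define k where "k i = ncomp G (part G A i)" for i
  define a where "a i = card (part G A i)" for i
  define k' where "k' = ncomp (glue G) A"
  have cV: "card (verts (glue G)) + 3 = 3 * ?V" by (rule card_verts_glue[OF G])
  have cA: "card A = a 0 + a 1 + a 2" unfolding a_def by (rule card_parts[OF A])
  have kk: "k' + 3 = k 0 + k 1 + k 2 + (if glue_cyclic G A then 1 else 0)"
    unfolding k_def k'_def by (rule ncomp_glue[OF G])
  have kpos: "1 \<le> k i" for i unfolding k_def using ncomp_pos[OF G] .
  have kpos': "1 \<le> k'" unfolding k'_def using ncomp_pos[OF wf_glue[OF G]] .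
  have ak: "?V \<le> a i + k i" for i
    using adm part_sub[of G A i] unfolding admissible_def k_def a_def by blast
  have w: "weight G (part G A i) x y = (x - 1) ^ (k i - 1) * (y - 1) ^ (a i + k i - ?V)" for i
    unfolding k_def a_def by (rule weight_formula[OF adm part_sub])
  have w': "weight (glue G) A x y = (x - 1) ^ (k' - 1) * (y - 1) ^ (card A + k' - card (verts (glue G)))"
    unfolding k'_def by (rule weight_formula[OF admissible_glue[OF adm]]) (use A len_glue in metis)
  have prod: "weight G (part G A 0) x y * weight G (part G A 1) x y * weight G (part G A 2) x y
      = (x - 1) ^ ((k 0 - 1) + (k 1 - 1) + (k 2 - 1))
        * (y - 1) ^ ((a 0 + k 0 - ?V) + (a 1 + k 1 - ?V) + (a 2 + k 2 - ?V))"
    unfolding w by (simp add: power_add algebra_simps)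
  show ?thesis
  proof (cases "glue_cyclic G A")
    case True
    then have "k' - 1 = (k 0 - 1) + (k 1 - 1) + (k 2 - 1)"
      and "card A + k' - card (verts (glue G)) = Suc ((a 0 + k 0 - ?V) + (a 1 + k 1 - ?V) + (a 2 + k 2 - ?V))"
      using kk kpos[of 0] kpos[of 1] kpos[of 2] kpos' ak[of 0] ak[of 1] ak[of 2] cA cV by auto
    then show ?thesis using True unfolding w' prod by (simp add: mult_ac)
  next
    case False
    then have x_exp: "Suc (k' - 1) = (k 0 - 1) + (k 1 - 1) + (k 2 - 1)"
      and y_exp: "card A + k' - card (verts (glue G)) = (a 0 + k 0 - ?V) + (a 1 + k 1 - ?V) + (a 2 + k 2 - ?V)"
      using kk kpos[of 0] kpos[of 1] kpos[of 2] kpos' ak[of 0] ak[of 1] ak[of 2] cA cV by auto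
    have "(x - 1) * (x - 1) ^ (k' - 1) = (x - 1) ^ ((k 0 - 1) + (k 1 - 1) + (k 2 - 1))"
      unfolding x_exp[symmetric] by simp
    then show ?thesis using False unfolding w' prod y_exp by (simp add: mult_ac)
  qed
qed

section \<open>Pattern sums and their recurrence\<close>

lemma sum_by_class:
  fixes c :: "'a \<Rightarrow> 'b" and w :: "'a \<Rightarrow> 'c::comm_semiring_1"
  assumes "finite S" "finite (UNIV :: 'b set)"
  shows "(\<Sum>B\<in>S. f (c B) * w B) = (\<Sum>p\<in>UNIV. f p * (\<Sum>B\<in>{B \<in> S. c B = p}. w B))"
proof -
  have "(\<Sum>B\<in>S. f (c B) * w B) = (\<Sum>p\<in>UNIV. \<Sum>B\<in>{B \<in> S. c B = p}. f (c B) * w B)"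
    by (rule sum.group[symmetric]) (use assms in auto)
  also have "\<dots> = (\<Sum>p\<in>UNIV. f p * (\<Sum>B\<in>{B \<in> S. c B = p}. w B))"
    by (rule sum.cong[OF refl]) (simp add: sum_distrib_left)
  finally show ?thesis .
qed

lemma sum_triple_by_class:
  fixes c :: "'a \<Rightarrow> 'b" and w :: "'a \<Rightarrow> 'c::comm_semiring_1"
  assumes S: "finite S" and fin: "finite (UNIV :: 'b set)"
    and Q: "\<And>p. Q p = (\<Sum>B\<in>{B \<in> S. c B = p}. w B)"
  shows "(\<Sum>B0\<in>S. \<Sum>B1\<in>S. \<Sum>B2\<in>S. F (c B0) (c B1) (c B2) * (w B0 * w B1 * w B2))
       = (\<Sum>p1\<in>UNIV. (\<Sum>p2\<in>UNIV. (\<Sum>p3\<in>UNIV. F p1 p2 p3 * Q p3) * Q p2) * Q p1)"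
proof -
  note by_class = sum_by_class[OF S fin]
  have inner: "(\<Sum>B2\<in>S. F a b (c B2) * w B2) = (\<Sum>p3\<in>UNIV. F a b p3 * Q p3)" for a b
    using by_class[of "F a b"] by (simp add: Q)
  have middle: "(\<Sum>B1\<in>S. (\<Sum>p3\<in>UNIV. F a (c B1) p3 * Q p3) * w B1)
      = (\<Sum>p2\<in>UNIV. (\<Sum>p3\<in>UNIV. F a p2 p3 * Q p3) * Q p2)" for a
    using by_class[of "\<lambda>p2. \<Sum>p3\<in>UNIV. F a p2 p3 * Q p3"] by (simp add: Q)
  have outer: "(\<Sum>B0\<in>S. (\<Sum>p2\<in>UNIV. (\<Sum>p3\<in>UNIV. F (c B0) p2 p3 * Q p3) * Q p2) * w B0)
      = (\<Sum>p1\<in>UNIV. (\<Sum>p2\<in>UNIV. (\<Sum>p3\<in>UNIV. F p1 p2 p3 * Q p3) * Q p2) * Q p1)"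
    using by_class[of "\<lambda>p1. \<Sum>p2\<in>UNIV. (\<Sum>p3\<in>UNIV. F p1 p2 p3 * Q p3) * Q p2"] by (simp add: Q)
  have "(\<Sum>B0\<in>S. \<Sum>B1\<in>S. \<Sum>B2\<in>S. F (c B0) (c B1) (c B2) * (w B0 * w B1 * w B2))
      = (\<Sum>B0\<in>S. (\<Sum>B1\<in>S. (\<Sum>B2\<in>S. F (c B0) (c B1) (c B2) * w B2) * w B1) * w B0)"
    by (simp add: sum_distrib_left sum_distrib_right mult_ac)
  then show ?thesis unfolding inner middle outer .
qed

lemma sum_Pow_glue:
  "(\<Sum>A\<in>Pow {..<3 * length (edges G)}. h (part G A 0) (part G A 1) (part G A 2))
   = (\<Sum>B0\<in>Pow {..<length (edges G)}. \<Sum>B1\<in>Pow {..<length (edges G)}.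
        \<Sum>B2\<in>Pow {..<length (edges G)}. h B0 B1 B2)"
proof -
  let ?m = "length (edges G)" and ?S = "Pow {..<length (edges G)}"
  have "(\<Sum>A\<in>Pow {..<3 * ?m}. h (part G A 0) (part G A 1) (part G A 2))
      = (\<Sum>(B0, B1, B2)\<in>?S \<times> ?S \<times> ?S. h B0 B1 B2)"
  proof (rule sum.reindex_bij_witness[of _ "\<lambda>(B0, B1, B2). join ?m B0 B1 B2"
        "\<lambda>A. (part G A 0, part G A 1, part G A 2)"])
    fix B assume "B \<in> ?S \<times> ?S \<times> ?S"
    then obtain B0 B1 B2 where B: "B = (B0, B1, B2)" "B0 \<subseteq> {..<?m}" "B1 \<subseteq> {..<?m}" "B2 \<subseteq> {..<?m}"
      by auto
    then show "(\<lambda>A. (part G A 0, part G A 1, part G A 2)) ((\<lambda>(B0, B1, B2). join ?m B0 B1 B2) B) = B"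
      using part_join[OF B(2-4) refl] by simp
    show "(\<lambda>(B0, B1, B2). join ?m B0 B1 B2) B \<in> Pow {..<3 * ?m}" using join_sub[OF B(2-4)] B(1) by simp
  qed (use join_part[OF _ refl] part_sub in auto)
  then show ?thesis by (simp add: sum.cartesian_product split_def)
qed

definition pattern_sum :: "sgraph \<Rightarrow> pattern \<Rightarrow> real \<Rightarrow> real \<Rightarrow> real" where
  "pattern_sum G q x y = (\<Sum>A\<in>{A \<in> Pow {..<length (edges G)}. pat_of G A = q}. weight G A x y)"

lemma finite_pattern: "finite (UNIV :: pattern set)"
  unfolding UNIV_pattern by simp

lemma tutte_pattern_sums:
  "tutte G x y = pattern_sum G Joint x y + pattern_sum G LR x y + pattern_sum G TL x y
     + pattern_sum G TR x y + pattern_sum G Sep x y"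
  using sum_by_class[OF _ finite_pattern, of "Pow {..<length (edges G)}" "\<lambda>_. 1" "pat_of G"
      "\<lambda>A. weight G A x y"]
  unfolding tutte_def spanning_def pattern_sum_def[symmetric] UNIV_pattern by simp

lemma pattern_sum_glue:
  assumes adm: "admissible G" and x: "x \<noteq> 1"
  shows "pattern_sum (glue G) q x y = recur y (1 / (x - 1)) (\<lambda>p. pattern_sum G p x y) q"
proof -
  have G: "wf_sgraph G" using adm unfolding admissible_def by auto
  let ?S = "Pow {..<length (edges G)}" and ?w = "\<lambda>B. weight G B x y"
  define F where "F p1 p2 p3 = (if glue_pattern p1 p2 p3 = q
      then (if cyclic p1 p2 p3 then y - 1 else 1 / (x - 1)) else 0)" for p1 p2 p3
  have weight_split: "(if pat_of (glue G) A = q then weight (glue G) A x y else 0)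
      = F (pat_of G (part G A 0)) (pat_of G (part G A 1)) (pat_of G (part G A 2))
        * (?w (part G A 0) * ?w (part G A 1) * ?w (part G A 2))"
    if A: "A \<in> Pow {..<3 * length (edges G)}" for A
    using weight_glue[OF adm, of A x y] A x unfolding F_def pat_glue[OF G] glue_cyclic_def
    by (auto simp: field_simps split: if_splits)
  have "pattern_sum (glue G) q x y
      = (\<Sum>A\<in>Pow {..<3 * length (edges G)}. if pat_of (glue G) A = q then weight (glue G) A x y else 0)"
    unfolding pattern_sum_def len_glue by (rule sum.inter_filter) simp
  also have "\<dots> = (\<Sum>A\<in>Pow {..<3 * length (edges G)}.
      F (pat_of G (part G A 0)) (pat_of G (part G A 1)) (pat_of G (part G A 2))
      * (?w (part G A 0) * ?w (part G A 1) * ?w (part G A 2)))"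
    by (rule sum.cong[OF refl weight_split])
  also have "\<dots> = (\<Sum>B0\<in>?S. \<Sum>B1\<in>?S. \<Sum>B2\<in>?S.
      F (pat_of G B0) (pat_of G B1) (pat_of G B2) * (?w B0 * ?w B1 * ?w B2))"
    using sum_Pow_glue[of "\<lambda>B0 B1 B2. F (pat_of G B0) (pat_of G B1) (pat_of G B2) * (?w B0 * ?w B1 * ?w B2)" G]
    by simp
  also have "\<dots> = recur y (1 / (x - 1)) (\<lambda>p. pattern_sum G p x y) q"
    unfolding recur_def F_def[symmetric]
    by (rule sum_triple_by_class[OF _ finite_pattern]) (simp_all add: pattern_sum_def)
  finally show ?thesis .
qed

section \<open>The triangle\<close>

lemma adj_triangle:
  "adj triangle A = {(u, v). (0 \<in> A \<and> ((u, v) = (0, 1) \<or> (u, v) = (1, 0)))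
     \<or> (1 \<in> A \<and> ((u, v) = (0, 2) \<or> (u, v) = (2, 0))) \<or> (2 \<in> A \<and> ((u, v) = (1, 2) \<or> (u, v) = (2, 1)))}"
proof -
  have ex3: "(\<exists>i\<in>A. i < 3 \<and> P i) \<longleftrightarrow> (0 \<in> A \<and> P 0) \<or> (1 \<in> A \<and> P 1) \<or> (2 \<in> A \<and> P 2)"
    for P :: "nat \<Rightarrow> bool"
    by (auto simp: eval_nat_numeral less_Suc_eq)
  have "edges triangle = [(0, 1), (0, 2), (1, 2)]" "length (edges triangle) = 3"
    by (simp_all add: triangle_def)
  then show ?thesis unfolding adj_def by (simp only: ex3) auto
qed

lemma triangle_simps:
  "verts triangle = {0, 1, 2}" "topv triangle = 0" "lftv triangle = 1" "rgtv triangle = 2"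
  "length (edges triangle) = 3"
  by (simp_all add: triangle_def)

lemma wf_triangle: "wf_sgraph triangle"
  by (simp add: wf_sgraph_def triangle_def)

lemma not_conn_closed:
  assumes "u \<in> Z" "v \<notin> Z" "\<And>a b. (a, b) \<in> adj G A \<Longrightarrow> a \<in> Z \<Longrightarrow> b \<in> Z"
  shows "\<not> conn G A u v"
proof
  assume "conn G A u v"
  then have "(u, v) \<in> (adj G A)\<^sup>*" unfolding conn_def .
  then have "v \<in> Z" by induct (use assms in blast)+
  with assms(2) show False by contradiction
qed

lemma triangle_patterns:
  "pat_of triangle {} = Sep" "pat_of triangle {0} = TL" "pat_of triangle {1} = TR"
  "pat_of triangle {2} = LR" "pat_of triangle {0, 1} = Joint" "pat_of triangle {0, 2} = Joint"
  "pat_of triangle {1, 2} = Joint" "pat_of triangle {0, 1, 2} = Joint"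
proof -
  have edge: "conn triangle A u v" if "(u, v) \<in> adj triangle A" for A u v
    using that unfolding conn_def by auto
  have apart: "\<not> conn triangle A u v" if "u \<in> Z" "v \<notin> Z" "adj triangle A \<subseteq> Z \<times> Z \<union> (- Z) \<times> (- Z)"
    for A u v Z
    using not_conn_closed[of u Z v triangle A] that by blast
  have "\<not> conn triangle {} 0 v" if "v \<noteq> 0" for v
    using that by (intro apart[of _ "{0}"]) (auto simp: adj_triangle)
  moreover have "\<not> conn triangle {} 1 2"
    by (rule apart[of _ "{1}"]) (auto simp: adj_triangle)
  ultimately show "pat_of triangle {} = Sep" unfolding pat_of_def triangle_simps by simp
  have "conn triangle {0} 0 1" "\<not> conn triangle {0} 1 2"
    by (rule edge, simp add: adj_triangle) (rule apart[of _ "{0, 1}"]; auto simp: adj_triangle)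
  then show "pat_of triangle {0} = TL" unfolding pat_of_def triangle_simps by simp
  have "\<not> conn triangle {1} 0 1" "\<not> conn triangle {1} 1 2"
    by (rule apart[of _ "{0, 2}"]; auto simp: adj_triangle) (rule apart[of _ "{1}"]; auto simp: adj_triangle)
  moreover have "conn triangle {1} 0 2" by (rule edge) (simp add: adj_triangle)
  ultimately show "pat_of triangle {1} = TR" unfolding pat_of_def triangle_simps by simp
  have "\<not> conn triangle {2} 0 1" "conn triangle {2} 1 2"
    by (rule apart[of _ "{0}"]; auto simp: adj_triangle) (rule edge, simp add: adj_triangle)
  then show "pat_of triangle {2} = LR" unfolding pat_of_def triangle_simps by simp
  have "conn triangle {0, 1} 1 0" "conn triangle {0, 1} 0 2"
    by (rule edge, simp add: adj_triangle)+
  then show "pat_of triangle {0, 1} = Joint"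
    unfolding pat_of_def triangle_simps using conn_sym conn_trans by metis
  have "conn triangle {0, 2} 0 1" "conn triangle {0, 2} 1 2"
    by (rule edge, simp add: adj_triangle)+
  then show "pat_of triangle {0, 2} = Joint" unfolding pat_of_def triangle_simps by simp
  have "conn triangle {1, 2} 0 2" "conn triangle {1, 2} 2 1"
    by (rule edge, simp add: adj_triangle)+
  then show "pat_of triangle {1, 2} = Joint"
    unfolding pat_of_def triangle_simps using conn_sym conn_trans by metis
  have "conn triangle {0, 1, 2} 0 1" "conn triangle {0, 1, 2} 1 2"
    by (rule edge, simp add: adj_triangle)+
  then show "pat_of triangle {0, 1, 2} = Joint" unfolding pat_of_def triangle_simps by simp
qed

text \<open>Every vertex of the triangle is a corner, so its components are the corner classes.\<close>

lemma ncomp_triangle: "ncomp triangle A = nclasses (pat_rel (pat_of triangle A)) [Ct, Cl, Cr]"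
proof -
  have "range (corner_vertex triangle) = verts triangle"
    unfolding range_corner_vertex by (simp add: triangle_simps)
  moreover have "u \<in> rclass (verts triangle) (adj triangle A) u" if "u \<in> verts triangle" for u
    using that unfolding rclass_def by simp
  ultimately have none: "{C \<in> rclass (verts triangle) (adj triangle A) ` verts triangle.
      C \<inter> range (corner_vertex triangle) = {}} = {}"
    by auto
  have "inner_comps triangle A = 0"
    unfolding inner_comps_def none by simp
  then show ?thesis using ncomp_corners[OF wf_triangle] by simp
qed

lemma sum_Pow_insert:
  assumes "a \<notin> A" "finite A"
  shows "(\<Sum>B\<in>Pow (insert a A). f B) = (\<Sum>B\<in>Pow A. f B + f (insert a B))"
proof -
  have "inj_on (insert a) (Pow A)" using assms unfolding inj_on_def by (auto simp: insert_ident)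
  moreover have "Pow A \<inter> insert a ` Pow A = {}" using assms by auto
  ultimately show ?thesis
    unfolding Pow_insert using assms by (simp add: sum.union_disjoint sum.reindex sum.distrib)
qed

lemma ball_Pow_insert: "(\<forall>B\<in>Pow (insert a A). P B) \<longleftrightarrow> (\<forall>B\<in>Pow A. P B \<and> P (insert a B))"
  unfolding Pow_insert by auto

lemma lessThan_3: "{..<3::nat} = {0, 1, 2}"
  by auto

lemma admissible_triangle: "admissible triangle"
proof -
  have "ncomp triangle {0, 1, 2} = 1"
    unfolding ncomp_triangle triangle_patterns by (simp add: ex_corner)
  moreover have "\<forall>A\<in>Pow {0, 1, 2}. card (verts triangle) \<le> card A + ncomp triangle A"
    by (simp add: ball_Pow_insert triangle_patterns[simplified] ncomp_triangle ex_corner triangle_simps)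
  ultimately show ?thesis
    unfolding admissible_def triangle_simps lessThan_3 using wf_triangle by auto
qed

lemma pattern_sums_triangle:
  "pattern_sum triangle Joint x y = y + 2" "pattern_sum triangle LR x y = x - 1"
  "pattern_sum triangle TL x y = x - 1" "pattern_sum triangle TR x y = x - 1"
  "pattern_sum triangle Sep x y = (x - 1) ^ 2"
proof -
  have weight: "weight triangle A x y
      = (x - 1) ^ (ncomp triangle A - 1) * (y - 1) ^ (card A + ncomp triangle A - card (verts triangle))"
    if "A \<in> Pow {0, 1, 2}" for A
    by (rule weight_formula[OF admissible_triangle]) (use that in \<open>simp add: triangle_simps lessThan_3\<close>)
  have sums: "pattern_sum triangle q x y
      = (\<Sum>A\<in>Pow {0, 1, 2}. if pat_of triangle A = q then weight triangle A x y else 0)" for q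
    unfolding pattern_sum_def triangle_simps lessThan_3 by (rule sum.inter_filter) simp
  show "pattern_sum triangle Joint x y = y + 2" "pattern_sum triangle LR x y = x - 1"
    "pattern_sum triangle TL x y = x - 1" "pattern_sum triangle TR x y = x - 1"
    "pattern_sum triangle Sep x y = (x - 1) ^ 2"
    unfolding sums by (simp_all add: sum_Pow_insert weight triangle_patterns[simplified] ncomp_triangle ex_corner
      triangle_simps power2_eq_square)
qed

section \<open>Sierpinski graphs\<close>

lemma Gamma_Suc: "1 \<le> n \<Longrightarrow> Gamma (Suc n) = glue (Gamma n)"
  by (cases n) auto

lemma admissible_Gamma: "1 \<le> n \<Longrightarrow> admissible (Gamma n)"
  by (induct n rule: Gamma.induct) (auto simp: admissible_triangle admissible_glue)

text \<open>At x = 1 only the connected spanning subgraphs have nonzero weight, so all pattern sums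
  except the Joint one vanish.\<close>

lemma ncomp_not_joint:
  assumes G: "wf_sgraph G" and p: "pat_of G A \<noteq> Joint"
  shows "2 \<le> ncomp G A"
proof -
  have "\<not> conn G A (topv G) (lftv G) \<or> \<not> conn G A (lftv G) (rgtv G)"
    using p unfolding pat_of_def by auto
  then show ?thesis using ncomp_two[OF G] G unfolding wf_sgraph_def by blast
qed

lemma pattern_sum_x_1:
  assumes adm: "admissible G" and q: "q \<noteq> Joint"
  shows "pattern_sum G q 1 y = 0"
proof -
  have G: "wf_sgraph G" using adm unfolding admissible_def by auto
  have "weight G A 1 y = 0" if "A \<subseteq> {..<length (edges G)}" "pat_of G A = q" for A
  proof -
    have "2 \<le> ncomp G A" using ncomp_not_joint[OF G] that(2) q by simp
    then show ?thesis unfolding weight_formula[OF adm that(1)] by simp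
  qed
  then show ?thesis unfolding pattern_sum_def by simp
qed

lemma pattern_sums_symmetric:
  assumes n: "1 \<le> n"
  shows "pattern_sum (Gamma n) TL x y = pattern_sum (Gamma n) LR x y
       \<and> pattern_sum (Gamma n) TR x y = pattern_sum (Gamma n) LR x y"
proof (cases "x = 1")
  case True
  then show ?thesis using pattern_sum_x_1[OF admissible_Gamma[OF n]] by simp
next
  case x: False
  show ?thesis using n
  proof (induct n rule: Gamma.induct)
    case 2
    then show ?case using pattern_sums_triangle by simp
  next
    case (3 n)
    let ?P = "\<lambda>p. pattern_sum (Gamma (Suc n)) p x y"
    have sym: "?P TL = ?P LR" "?P TR = ?P LR" using 3 by auto
    show ?case using pattern_sum_glue[OF admissible_Gamma x] recur_pair[OF sym] by simp
  qed simp
qed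

lemma pattern_sum_Gamma_Suc:
  assumes "1 \<le> n" "x \<noteq> 1"
  shows "pattern_sum (Gamma (n + 1)) q x y = recur y (1 / (x - 1)) (\<lambda>p. pattern_sum (Gamma n) p x y) q"
  using pattern_sum_glue[OF admissible_Gamma[OF assms(1)] assms(2)] Gamma_Suc[OF assms(1)] by simp

lemma T2_pattern_sum: "T2 n x y = pattern_sum (Gamma n) Joint x y"
  unfolding T2_def Let_def spanning_def pattern_sum_def
  by (rule sum.cong) (auto simp: pat_of_def split: if_splits)

lemma T1_pattern_sum: "T1 n x y = pattern_sum (Gamma n) LR x y"
  unfolding T1_def Let_def spanning_def pattern_sum_def
  by (rule sum.cong) (auto simp: pat_of_def split: if_splits)

lemma T0_pattern_sum: "T0 n x y = pattern_sum (Gamma n) Sep x y"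
  unfolding T0_def Let_def spanning_def pattern_sum_def
  by (rule sum.cong) (auto simp: pat_of_def split: if_splits)

lemma Tn_decomposition:
  assumes "1 \<le> n"
  shows "Tn n x y = T2 n x y + 3 * T1 n x y + T0 n x y"
  unfolding Tn_def tutte_pattern_sums T2_pattern_sum T1_pattern_sum T0_pattern_sum
  using pattern_sums_symmetric[OF assms, of x y] by simp

lemma T_initial: "T2 1 x y = y + 2" "T1 1 x y = x - 1" "T0 1 x y = (x - 1) ^ 2"
  unfolding T2_pattern_sum T1_pattern_sum T0_pattern_sum using pattern_sums_triangle by simp_all

lemma T_recurrence:
  assumes n: "1 \<le> n" and x: "x \<noteq> 1"
  shows "T2 (n+1) x y = (y - 1) * T2 n x y ^ 3
          + (1 / (x - 1)) * (6 * T2 n x y ^ 2 * T1 n x y + 3 * T2 n x y * T1 n x y ^ 2)"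
    and "T1 (n+1) x y = (y - 1) * T2 n x y ^ 2 * T1 n x y
          + (1 / (x - 1)) * (T2 n x y ^ 2 * T0 n x y + 7 * T2 n x y * T1 n x y ^ 2
             + 2 * T2 n x y * T1 n x y * T0 n x y + 4 * T1 n x y ^ 3 + T1 n x y ^ 2 * T0 n x y)"
    and "T0 (n+1) x y = (y - 1) * (3 * T2 n x y * T1 n x y ^ 2 + T1 n x y ^ 3)
          + (1 / (x - 1)) * (12 * T2 n x y * T1 n x y * T0 n x y + 3 * T2 n x y * T0 n x y ^ 2
             + 14 * T1 n x y ^ 3 + 24 * T1 n x y ^ 2 * T0 n x y + 9 * T1 n x y * T0 n x y ^ 2
             + T0 n x y ^ 3)"
  unfolding T2_pattern_sum T1_pattern_sum T0_pattern_sum pattern_sum_Gamma_Suc[OF n x]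
  using pattern_sums_symmetric[OF n, of x y] by (simp_all add: recur_Joint recur_pair recur_Sep)

theorem theorem3p1:
  fixes x y :: real
  shows "(\<forall>n\<ge>1. Tn n x y = T2 n x y + 3 * T1 n x y + T0 n x y)
    \<and> T2 1 x y = y + 2 \<and> T1 1 x y = x - 1 \<and> T0 1 x y = (x - 1) ^ 2
    \<and> (x \<noteq> 1 \<longrightarrow> (\<forall>n\<ge>1.
        T2 (n+1) x y = (y - 1) * T2 n x y ^ 3
          + (1 / (x - 1)) * (6 * T2 n x y ^ 2 * T1 n x y + 3 * T2 n x y * T1 n x y ^ 2)
      \<and> T1 (n+1) x y = (y - 1) * T2 n x y ^ 2 * T1 n x y
          + (1 / (x - 1)) * (T2 n x y ^ 2 * T0 n x y + 7 * T2 n x y * T1 n x y ^ 2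
             + 2 * T2 n x y * T1 n x y * T0 n x y + 4 * T1 n x y ^ 3 + T1 n x y ^ 2 * T0 n x y)
      \<and> T0 (n+1) x y = (y - 1) * (3 * T2 n x y * T1 n x y ^ 2 + T1 n x y ^ 3)
          + (1 / (x - 1)) * (12 * T2 n x y * T1 n x y * T0 n x y + 3 * T2 n x y * T0 n x y ^ 2
             + 14 * T1 n x y ^ 3 + 24 * T1 n x y ^ 2 * T0 n x y + 9 * T1 n x y * T0 n x y ^ 2
             + T0 n x y ^ 3)))"
  using Tn_decomposition T_initial T_recurrence by simp

end
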